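(* Let $d\ge2$ and let $f:\mathbb{R}^d\to\mathbb{R}$ be bounded, Borel-measurable, with $\mathrm{supp}(f)\subset[0,1]^d$. Then the value function $U$ defined below is a Pareto-monotone viscosity solution of \[U_{x_1}\cdots U_{x_d}=\frac{1}{d^d}f\quad\text{on }\mathbb{R}^d.\] Furthermore: (i) whenever $\mathrm{supp}(f)\subset\{x:0\leqq x\leqq z\}$ for some $z\in\mathbb{R}^d$, we have $U(x_1,\dots,x_d)=U(\min(x_1,z_1),\dots,\min(x_d,z_d))$ for all $x\in\mathbb{R}^d_+$; (ii) $U(x)=0$ for every $x\in\mathbb{R}^d\setminus\mathbb{R}^d_+$.
   Context: For $x,y\in\mathbb{R}^d$, $x\leqq y$ means $x_i\le y_i$ for all $i$; $\mathbb{R}^d_+=\{x:x_i>0\ \forall i\}$. Let $\mathcal{A}$ be the set of $\gamma\in C^1([0,1];\mathbb{R}^d)$ such that for every $t$, all components of $\gamma'(t)$ are nonnegative and $\gamma'(t)\ne0$. $J(\gamma)=\int_0^1 f(\gamma(t))^{1/d}(\gamma_1'(t)\cdots\gamma_d'(t))^{1/d}\,dt$ and $U(x)=\sup\{J(\gamma):\gamma\in\mathcal{A},\ \gamma(1)\leqq x\}$. A function $u$ is Pareto-monotone if $x\leqq y$ implies $u(x)\le u(y)$. Superdifferential $D^+u(x)$: all $p$ with $u(y)\le u(x)+\langle p,y-x\rangle+o(|y-x|)$ as $y\to x$; subdifferential $D^-u(x)$: all $p$ with $u(y)\ge u(x)+\langle p,y-x\rangle+o(|y-x|)$. For bounded $g$,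 $g^*(x)=\limsup_{r\searrow0}\sup\{g(y):|x-y|\le r\}$ and $g_*=-(-g)^*$. A continuous $u$ is a viscosity solution of $u_{x_1}\cdots u_{x_d}=g$ on an open set $\mathcal O$ if for all $x\in\mathcal O$: $p_1\cdots p_d\le g^*(x)$ for all $p\in D^+u(x)$, and $p_1\cdots p_d\ge g_*(x)$ for all $p\in D^-u(x)$. *)

theory Defs
  imports "HOL-Analysis.Analysis"
begin

text \<open>Points of R^d are elements of real^'n with d = CARD('n).
  The order \<le> on real^'n is the componentwise (Pareto) order.\<close>

definition admissible :: "(real \<Rightarrow> real^'n) \<Rightarrow> bool" where
  "admissible \<gamma> \<longleftrightarrow>
     (\<exists>g. continuous_on {0..1} g \<and>
          (\<forall>t\<in>{0..1}. (\<gamma> has_vector_derivative g t) (at t within {0..1})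
                      \<and> (\<forall>i. 0 \<le> g t $ i) \<and> g t \<noteq> 0))"

definition Jfun :: "(real^'n \<Rightarrow> real) \<Rightarrow> (real \<Rightarrow> real^'n) \<Rightarrow> real" where
  "Jfun f \<gamma> = integral {0..1}
     (\<lambda>t. root CARD('n) (f (\<gamma> t)) *
          root CARD('n) (\<Prod>i\<in>UNIV. vector_derivative \<gamma> (at t within {0..1}) $ i))"

definition Ufun :: "(real^'n \<Rightarrow> real) \<Rightarrow> real^'n \<Rightarrow> real" where
  "Ufun f x = Sup {Jfun f \<gamma> | \<gamma>. admissible \<gamma> \<and> \<gamma> 1 \<le> x}"

definition pareto_monotone :: "(real^'n \<Rightarrow> real) \<Rightarrow> bool" where
  "pareto_monotone u \<longleftrightarrow> (\<forall>x y. x \<le> y \<longrightarrow> u x \<le> u y)"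

definition superdiff :: "(real^'n \<Rightarrow> real) \<Rightarrow> real^'n \<Rightarrow> (real^'n) set" where
  "superdiff u x = {p. \<forall>\<epsilon>>0. \<exists>\<delta>>0. \<forall>y. norm (y - x) < \<delta> \<longrightarrow>
       u y \<le> u x + inner p (y - x) + \<epsilon> * norm (y - x)}"

definition subdiff :: "(real^'n \<Rightarrow> real) \<Rightarrow> real^'n \<Rightarrow> (real^'n) set" where
  "subdiff u x = {p. \<forall>\<epsilon>>0. \<exists>\<delta>>0. \<forall>y. norm (y - x) < \<delta> \<longrightarrow>
       u y \<ge> u x + inner p (y - x) - \<epsilon> * norm (y - x)}"

text \<open>Upper semicontinuous envelope: limsup as r decreases to 0 of sup over cball x r;
  the inner sup is nonincreasing in r, so the limit equals the infimum over r > 0.\<close>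
definition usc_env :: "(real^'n \<Rightarrow> real) \<Rightarrow> real^'n \<Rightarrow> real" where
  "usc_env g x = Inf ((\<lambda>r. Sup (g ` cball x r)) ` {0<..})"

definition lsc_env :: "(real^'n \<Rightarrow> real) \<Rightarrow> real^'n \<Rightarrow> real" where
  "lsc_env g x = - usc_env (\<lambda>y. - g y) x"

definition viscosity_solution ::
  "(real^'n \<Rightarrow> real) \<Rightarrow> (real^'n \<Rightarrow> real) \<Rightarrow> (real^'n) set \<Rightarrow> bool" where
  "viscosity_solution u g S \<longleftrightarrow> open S \<and> continuous_on S u \<and>
     (\<forall>x\<in>S. (\<forall>p\<in>superdiff u x. (\<Prod>i\<in>UNIV. p $ i) \<le> usc_env g x) \<and>
            (\<forall>p\<in>subdiff u x. (\<Prod>i\<in>UNIV. p $ i) \<ge> lsc_env g x))"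

definition support :: "(real^'n \<Rightarrow> real) \<Rightarrow> (real^'n) set" where
  "support f = closure {x. f x \<noteq> 0}"

end

theory Submission
  imports Defs
begin

text \<open>By the AM-GM inequality, for any positive weights \<open>L\<close> the integrand
  \<open>f(\<gamma>)\<^sup>1\<^sup>/\<^sup>d (\<gamma>'\<^sub>1\<cdots>\<gamma>'\<^sub>d)\<^sup>1\<^sup>/\<^sup>d\<close> is at most \<open>(sup f)\<^sup>1\<^sup>/\<^sup>d \<langle>L, \<gamma>'\<rangle> / (d (\<Prod>L)\<^sup>1\<^sup>/\<^sup>d)\<close>, so a piece of
  curve contributes at most a multiple of its increment. With \<open>L = 1/(increment + e)\<close> this shows
  that \<open>U\<close> vanishes off the open orthant and is Hoelder continuous; with \<open>L = p\<close> it shows that a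
  superdifferential \<open>p\<close> with \<open>d\<^sup>d \<Prod>p > f\<close> near \<open>x\<close> would make near-optimal curves lose more
  than they can gain close to \<open>x\<close>. Conversely, extending a near-optimal curve for \<open>x - h v\<close>,
  \<open>v \<approx> 1/p\<close>, by a segment to \<open>x\<close> gains \<open>h (f \<Prod>v)\<^sup>1\<^sup>/\<^sup>d\<close>, which rules out a subdifferential \<open>p\<close>
  with \<open>d\<^sup>d \<Prod>p < f\<close> near \<open>x\<close>. Truncation at \<open>z\<close> holds because \<open>f\<close> vanishes along a curve
  after the last time it lies below \<open>z\<close>.\<close>

lemma root_prod_le_mean:
  fixes x :: "'n::finite \<Rightarrow> real"
  assumes "\<And>i. 0 \<le> x i"
  shows "root CARD('n) (\<Prod>i\<in>UNIV. x i) \<le> (\<Sum>i\<in>UNIV. x i) / CARD('n)"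
proof -
  have "(\<Prod>i\<in>UNIV. x i) powr (1 / CARD('n)) \<le> (\<Sum>i\<in>UNIV. x i / CARD('n))"
    by (rule arith_geom_mean) (auto simp: assms)
  moreover have "root CARD('n) (\<Prod>i\<in>UNIV. x i) = (\<Prod>i\<in>UNIV. x i) powr (1 / CARD('n))"
    by (rule root_powr_inverse) (auto simp: assms prod_nonneg)
  ultimately show ?thesis by (simp add: sum_divide_distrib)
qed

lemma root_prod_le_weighted_mean:
  fixes x l :: "'n::finite \<Rightarrow> real"
  assumes "\<And>i. 0 \<le> x i" "\<And>i. 0 < l i"
  shows "root CARD('n) (\<Prod>i\<in>UNIV. x i)
           \<le> (\<Sum>i\<in>UNIV. l i * x i) / (CARD('n) * root CARD('n) (\<Prod>i\<in>UNIV. l i))"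
proof -
  have "root CARD('n) (\<Prod>i\<in>UNIV. l i) * root CARD('n) (\<Prod>i\<in>UNIV. x i)
          = root CARD('n) (\<Prod>i\<in>UNIV. l i * x i)"
    by (simp add: prod.distrib real_root_mult)
  also have "\<dots> \<le> (\<Sum>i\<in>UNIV. l i * x i) / CARD('n)"
    using assms by (intro root_prod_le_mean) (simp add: less_imp_le)
  finally show ?thesis
    using assms(2) by (simp add: prod_pos field_simps)
qed

lemma root_prod_scale:
  fixes v :: "real^'n"
  assumes "0 \<le> l"
  shows "root CARD('n) (\<Prod>i\<in>UNIV. l * v $ i) = l * root CARD('n) (\<Prod>i\<in>UNIV. v $ i)"
  using assms by (simp add: prod.distrib real_root_mult real_root_power_cancel)

lemma norm_le_card_mult:
  fixes v :: "real^'n" and k :: real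
  assumes "\<And>i. \<bar>v $ i\<bar> \<le> k"
  shows "norm v \<le> CARD('n) * k"
proof -
  have "norm v \<le> (\<Sum>i\<in>UNIV. \<bar>v $ i\<bar>)" by (rule norm_le_l1_cart)
  also have "\<dots> \<le> (\<Sum>i\<in>(UNIV::'n set). k)" by (rule sum_mono) (use assms in auto)
  finally show ?thesis by simp
qed

definition admissible_deriv :: "(real \<Rightarrow> real^'n) \<Rightarrow> (real \<Rightarrow> real^'n) \<Rightarrow> bool" where
  "admissible_deriv \<gamma> \<gamma>' \<longleftrightarrow> continuous_on {0..1} \<gamma>' \<and>
     (\<forall>t\<in>{0..1}. (\<gamma> has_vector_derivative \<gamma>' t) (at t within {0..1}) \<and> 0 \<le> \<gamma>' t \<and> \<gamma>' t \<noteq> 0)"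

lemma admissible_iff_deriv: "admissible \<gamma> \<longleftrightarrow> (\<exists>\<gamma>'. admissible_deriv \<gamma> \<gamma>')"
  unfolding admissible_def admissible_deriv_def by (simp add: less_eq_vec_def)

definition J_integrand :: "(real^'n \<Rightarrow> real) \<Rightarrow> (real \<Rightarrow> real^'n) \<Rightarrow> real \<Rightarrow> real" where
  "J_integrand f \<gamma> t = root CARD('n) (f (\<gamma> t)) *
     root CARD('n) (\<Prod>i\<in>UNIV. vector_derivative \<gamma> (at t within {0..1}) $ i)"

lemma Jfun_eq_integral: "Jfun f \<gamma> = integral {0..1} (J_integrand f \<gamma>)"
  unfolding Jfun_def J_integrand_def ..

lemma J_integrand_eq_0: "f (\<gamma> t) = 0 \<Longrightarrow> J_integrand f \<gamma> t = 0"
  by (simp add: J_integrand_def)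

context
  fixes \<gamma> \<gamma>' :: "real \<Rightarrow> real^'n"
  assumes adm: "admissible_deriv \<gamma> \<gamma>'"
begin

lemma admissible_deriv_nonneg: "t \<in> {0..1} \<Longrightarrow> 0 \<le> \<gamma>' t $ i"
  using adm by (auto simp: admissible_deriv_def less_eq_vec_def)

lemma J_integrand_eq:
  "t \<in> {0..1} \<Longrightarrow> J_integrand f \<gamma> t = root CARD('n) (f (\<gamma> t)) * root CARD('n) (\<Prod>i\<in>UNIV. \<gamma>' t $ i)"
  using adm unfolding J_integrand_def admissible_deriv_def
  by (subst vector_derivative_within_closed_interval) auto

lemma J_integrand_nonneg: "(\<And>x. 0 \<le> f x) \<Longrightarrow> t \<in> {0..1} \<Longrightarrow> 0 \<le> J_integrand f \<gamma> t"
  by (simp add: J_integrand_eq admissible_deriv_nonneg prod_nonneg)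

lemma admissible_deriv_continuous: "continuous_on {0..1} \<gamma>"
  using adm unfolding admissible_deriv_def continuous_on_eq_continuous_within has_vector_derivative_def
  by (meson has_derivative_continuous)

lemma admissible_deriv_has_integral:
  assumes "0 \<le> a" "a \<le> b" "b \<le> 1"
  shows "(\<gamma>' has_integral (\<gamma> b - \<gamma> a)) {a..b}"
proof (rule fundamental_theorem_of_calculus)
  fix t assume "t \<in> {a..b}"
  then have "(\<gamma> has_vector_derivative \<gamma>' t) (at t within {0..1})"
    using adm assms unfolding admissible_deriv_def by auto
  then show "(\<gamma> has_vector_derivative \<gamma>' t) (at t within {a..b})"
    by (rule has_vector_derivative_within_subset) (use assms in auto)
qed fact

lemma admissible_deriv_mono:
  assumes "0 \<le> a" "a \<le> b" "b \<le> 1"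
  shows "\<gamma> a \<le> \<gamma> b"
  unfolding less_eq_vec_def
proof
  fix i
  have "((\<lambda>t. \<gamma>' t $ i) has_integral (\<gamma> b - \<gamma> a) $ i) {a..b}"
    using has_integral_linear[OF admissible_deriv_has_integral[OF assms] bounded_linear_vec_nth]
    by (simp add: o_def)
  then have "0 \<le> (\<gamma> b - \<gamma> a) $ i"
    by (rule has_integral_nonneg) (use assms admissible_deriv_nonneg in auto)
  then show "\<gamma> a $ i \<le> \<gamma> b $ i" by simp
qed

lemma admissible_deriv_rescale:
  assumes "0 < s" "s \<le> 1"
  shows "admissible_deriv (\<lambda>t. \<gamma> (s * t)) (\<lambda>t. s *\<^sub>R \<gamma>' (s * t))"
  unfolding admissible_deriv_def
proof (intro conjI ballI)
  have img: "(\<lambda>t. s * t) ` {0..1} \<subseteq> {0..1}" using assms by (auto simp: mult_le_one)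
  show "continuous_on {0..1} (\<lambda>t. s *\<^sub>R \<gamma>' (s * t))"
    using adm unfolding admissible_deriv_def
    by (intro continuous_intros continuous_on_compose2[of "{0..1}" \<gamma>' _ "\<lambda>t. s * t"]) (use img in auto)
  fix t :: real assume t: "t \<in> {0..1}"
  have st: "s * t \<in> {0..1}" using t assms by (auto simp: mult_le_one)
  have "((\<lambda>t. s * t) has_vector_derivative s) (at t within {0..1})"
    by (auto intro!: derivative_eq_intros simp: has_real_derivative_iff_has_vector_derivative[symmetric])
  moreover have "(\<gamma> has_vector_derivative \<gamma>' (s * t)) (at (s * t) within (\<lambda>t. s * t) ` {0..1})"
    using adm st img unfolding admissible_deriv_def by (meson has_vector_derivative_within_subset)
  ultimately show "((\<lambda>t. \<gamma> (s * t)) has_vector_derivative s *\<^sub>R \<gamma>' (s * t)) (at t within {0..1})"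
    by (subst o_def[symmetric, of \<gamma>]) (rule vector_diff_chain_within)
  show "0 \<le> s *\<^sub>R \<gamma>' (s * t)" "s *\<^sub>R \<gamma>' (s * t) \<noteq> 0"
    using adm st assms unfolding admissible_deriv_def by (auto intro: scaleR_nonneg_nonneg)
qed

end

lemma integral_eq_integral_subinterval:
  fixes h :: "real \<Rightarrow> 'a::banach"
  assumes "{a..b} \<subseteq> {s..t}" and "\<And>\<tau>. \<tau> \<in> {s..t} \<Longrightarrow> \<tau> \<notin> {a..b} \<Longrightarrow> h \<tau> = 0"
  shows "integral {s..t} h = integral {a..b} h"
proof -
  have "integral {s..t} h = integral {s..t} (\<lambda>\<tau>. if \<tau> \<in> {a..b} then h \<tau> else 0)"
    by (rule integral_cong) (use assms(2) in auto)
  also have "\<dots> = integral ({a..b} \<inter> {s..t}) h"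
    by (rule Henstock_Kurzweil_Integration.integral_restrict_Int)
  also have "{a..b} \<inter> {s..t} = {a..b}"
    using assms(1) by blast
  finally show ?thesis .
qed

lemma nonpos_if_le_mult_root:
  fixes a C :: real
  assumes "0 < n" "0 \<le> C" and le: "\<And>h. 0 < h \<Longrightarrow> h \<le> 1 \<Longrightarrow> a \<le> C * root n h"
  shows "a \<le> 0"
proof (rule ccontr)
  assume "\<not> a \<le> 0"
  then have a: "0 < a" by simp
  define h where "h = min 1 ((a / (2 * C + 1)) ^ n)"
  have "root n h \<le> root n ((a / (2 * C + 1)) ^ n)" using assms(1) by (simp add: h_def)
  also have "\<dots> = a / (2 * C + 1)" using a assms(1,2) by (simp add: real_root_power_cancel)
  finally have "C * root n h \<le> C * (a / (2 * C + 1))" by (rule mult_left_mono) fact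
  also have "\<dots> < a" using a assms(2) by (simp add: field_simps add_pos_nonneg)
  finally show False using le[of h] a assms(2) by (simp add: h_def)
qed

section \<open>Estimates for the action integral\<close>

locale bounded_density =
  fixes f :: "real^'n \<Rightarrow> real" and B :: real
  assumes f_measurable: "f \<in> borel_measurable borel"
    and f_nonneg: "\<And>x. 0 \<le> f x" and f_le: "\<And>x. f x \<le> B"
begin

lemma B_nonneg: "0 \<le> B"
  using f_nonneg f_le order_trans by blast

lemma J_integrand_integrable:
  assumes adm: "admissible_deriv \<gamma> \<gamma>'" and "0 \<le> a" "b \<le> 1"
  shows "J_integrand f \<gamma> integrable_on {a..b}"
proof -
  have "\<gamma> \<in> borel_measurable (lebesgue_on {0..1})"
    using admissible_deriv_continuous[OF adm]
    by (intro continuous_imp_measurable_on_sets_lebesgue) auto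
  from measurable_compose[OF measurable_compose[OF this f_measurable] borel_measurable_root]
  have meas: "(\<lambda>t. root CARD('n) (f (\<gamma> t))) \<in> borel_measurable (lebesgue_on {0..1})"
    by (simp add: o_def)
  have bdd: "bounded ((\<lambda>t. root CARD('n) (f (\<gamma> t))) ` {0..1})"
    unfolding bounded_iff using f_nonneg f_le by (intro exI[of _ "root CARD('n) B"]) auto
  have "continuous_on {0..1} (\<lambda>t. root CARD('n) (\<Prod>i\<in>UNIV. \<gamma>' t $ i))"
    using adm unfolding admissible_deriv_def by (intro continuous_intros) auto
  then have "(\<lambda>t. root CARD('n) (f (\<gamma> t)) * root CARD('n) (\<Prod>i\<in>UNIV. \<gamma>' t $ i))
               absolutely_integrable_on {0..1}"
    by (intro absolutely_integrable_bounded_measurable_product_real[OF meas _ bdd]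
        absolutely_integrable_continuous_real) auto
  then have "J_integrand f \<gamma> integrable_on {0..1}"
    using set_lebesgue_integral_eq_integral(1)
    by (subst integrable_cong[OF J_integrand_eq[OF adm]]) auto
  then show ?thesis
    by (rule integrable_subinterval_real) (use assms in auto)
qed

text \<open>Pointwise, the integrand is bounded via weighted AM-GM by a linear function of \<open>\<gamma>'\<close>,
  whose integral is given by the fundamental theorem of calculus.\<close>

lemma integral_J_integrand_le_weighted:
  assumes adm: "admissible_deriv \<gamma> \<gamma>'" and ab: "0 \<le> a" "a \<le> b" "b \<le> 1"
    and M: "\<And>t. t \<in> {a..b} \<Longrightarrow> f (\<gamma> t) \<le> M" and L: "\<And>i. 0 < L $ i"
  shows "integral {a..b} (J_integrand f \<gamma>)
           \<le> root CARD('n) M * inner L (\<gamma> b - \<gamma> a) / (CARD('n) * root CARD('n) (\<Prod>i\<in>UNIV. L $ i))"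
proof -
  define W where "W = root CARD('n) M / (CARD('n) * root CARD('n) (\<Prod>i\<in>UNIV. L $ i))"
  have M0: "0 \<le> M" using M[of a] f_nonneg[of "\<gamma> a"] ab by auto
  have lin: "((\<lambda>t. W * inner L (\<gamma>' t)) has_integral W * inner L (\<gamma> b - \<gamma> a)) {a..b}"
    using has_integral_linear[OF admissible_deriv_has_integral[OF adm ab] bounded_linear_inner_right[of L]]
    by (intro has_integral_mult_right) (simp add: o_def)
  have "J_integrand f \<gamma> t \<le> W * inner L (\<gamma>' t)" if t: "t \<in> {a..b}" for t
  proof -
    have t01: "t \<in> {0..1}" using t ab by auto
    have "root CARD('n) (\<Prod>i\<in>UNIV. \<gamma>' t $ i)
            \<le> (\<Sum>i\<in>UNIV. L $ i * \<gamma>' t $ i) / (CARD('n) * root CARD('n) (\<Prod>i\<in>UNIV. L $ i))"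
      by (rule root_prod_le_weighted_mean) (use L admissible_deriv_nonneg[OF adm t01] in auto)
    then have "root CARD('n) (\<Prod>i\<in>UNIV. \<gamma>' t $ i)
            \<le> inner L (\<gamma>' t) / (CARD('n) * root CARD('n) (\<Prod>i\<in>UNIV. L $ i))"
      by (simp add: inner_vec_def)
    moreover have "root CARD('n) (f (\<gamma> t)) \<le> root CARD('n) M" using M[OF t] by simp
    ultimately have "root CARD('n) (f (\<gamma> t)) * root CARD('n) (\<Prod>i\<in>UNIV. \<gamma>' t $ i)
        \<le> root CARD('n) M * (inner L (\<gamma>' t) / (CARD('n) * root CARD('n) (\<Prod>i\<in>UNIV. L $ i)))"
      using M0 f_nonneg admissible_deriv_nonneg[OF adm t01]
      by (intro mult_mono) (auto simp: prod_nonneg)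
    then show ?thesis
      unfolding J_integrand_eq[OF adm t01] W_def by simp
  qed
  then have "integral {a..b} (J_integrand f \<gamma>) \<le> integral {a..b} (\<lambda>t. W * inner L (\<gamma>' t))"
    by (intro integral_le J_integrand_integrable[OF adm ab(1,3)] has_integral_integrable[OF lin])
  also have "\<dots> = W * inner L (\<gamma> b - \<gamma> a)"
    by (rule integral_unique[OF lin])
  finally show ?thesis by (simp add: W_def)
qed

lemma integral_J_integrand_le:
  assumes adm: "admissible_deriv \<gamma> \<gamma>'" and ab: "0 \<le> a" "a \<le> b" "b \<le> 1"
    and M: "\<And>t. t \<in> {a..b} \<Longrightarrow> f (\<gamma> t) \<le> M" and e: "0 < e"
  shows "integral {a..b} (J_integrand f \<gamma>)
           \<le> root CARD('n) M * root CARD('n) (\<Prod>i\<in>UNIV. (\<gamma> b - \<gamma> a) $ i + e)"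
proof -
  define D where "D = \<gamma> b - \<gamma> a"
  have D0: "0 \<le> D $ i" for i
    using admissible_deriv_mono[OF adm ab] by (simp add: D_def less_eq_vec_def)
  define L :: "real^'n" where "L = (\<chi> i. 1 / (D $ i + e))"
  have L: "0 < L $ i" for i using D0[of i] e by (simp add: L_def)
  have "inner L D \<le> (\<Sum>i\<in>(UNIV::'n set). 1)"
    unfolding inner_vec_def L_def using D0 e by (intro sum_mono) (simp add: add_nonneg_pos)
  then have "inner L D \<le> CARD('n)" by simp
  moreover have "0 \<le> root CARD('n) M" using M[of a] f_nonneg[of "\<gamma> a"] ab by simp
  ultimately have "root CARD('n) M * inner L D \<le> root CARD('n) M * CARD('n)"
    by (rule mult_left_mono)
  moreover have R: "0 < CARD('n) * root CARD('n) (\<Prod>i\<in>UNIV. L $ i)"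
    using L by (simp add: prod_pos)
  ultimately have "root CARD('n) M * inner L D / (CARD('n) * root CARD('n) (\<Prod>i\<in>UNIV. L $ i))
      \<le> root CARD('n) M * CARD('n) / (CARD('n) * root CARD('n) (\<Prod>i\<in>UNIV. L $ i))"
    by (intro divide_right_mono) auto
  also have "\<dots> = root CARD('n) M / root CARD('n) (\<Prod>i\<in>UNIV. L $ i)"
    by simp
  also have "\<dots> = root CARD('n) M * root CARD('n) (\<Prod>i\<in>UNIV. D $ i + e)"
    by (simp add: L_def prod_dividef real_root_divide)
  finally show ?thesis
    using integral_J_integrand_le_weighted[OF adm ab M L] by (simp add: D_def)
qed

lemma Jfun_rescale:
  assumes adm: "admissible_deriv \<gamma> \<gamma>'" and s: "0 < s" "s \<le> 1"
  shows "Jfun f (\<lambda>t. \<gamma> (s * t)) = integral {0..s} (J_integrand f \<gamma>)"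
proof -
  have eq: "J_integrand f (\<lambda>t. \<gamma> (s * t)) t = s * J_integrand f \<gamma> (s * t)" if t: "t \<in> {0..1}" for t
  proof -
    have "s * t \<in> {0..1}" using t s by (auto simp: mult_le_one)
    then show ?thesis
      using s J_integrand_eq[OF admissible_deriv_rescale[OF adm s] t]
      by (simp add: J_integrand_eq[OF adm] root_prod_scale)
  qed
  have "(J_integrand f \<gamma> has_integral integral {0..s} (J_integrand f \<gamma>)) (cbox 0 s)"
    using J_integrand_integrable[OF adm, of 0 s] s by auto
  from has_integral_affinity'[OF this, of s 0] s
  have "((\<lambda>t. J_integrand f \<gamma> (s * t)) has_integral integral {0..s} (J_integrand f \<gamma>) / s) {0..1}"
    by (simp add: divide_inverse mult.commute)
  from has_integral_mult_right[OF this, of s] s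
  have "((\<lambda>t. s * J_integrand f \<gamma> (s * t)) has_integral integral {0..s} (J_integrand f \<gamma>)) {0..1}"
    by simp
  then show ?thesis
    unfolding Jfun_eq_integral by (intro integral_unique) (rule has_integral_eq[rotated], use eq in auto)
qed

lemma Jfun_split:
  assumes adm: "admissible_deriv \<gamma> \<gamma>'" and s: "0 < s" "s \<le> 1"
  shows "Jfun f \<gamma> = Jfun f (\<lambda>t. \<gamma> (s * t)) + integral {s..1} (J_integrand f \<gamma>)"
  using Henstock_Kurzweil_Integration.integral_combine[OF _ s(2) J_integrand_integrable[OF adm]] s
    Jfun_rescale[OF assms]
  by (simp add: Jfun_eq_integral)

end

section \<open>The value function\<close>

locale unit_cube_density = bounded_density f B for f :: "real^'n \<Rightarrow> real" and B +
  assumes f_support: "\<And>x. f x \<noteq> 0 \<Longrightarrow> x \<in> {0..1}"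
begin

text \<open>Only the part of the curve between its first and last visit of the unit cube contributes.\<close>

lemma integral_J_integrand_le_cube_increment:
  assumes adm: "admissible_deriv \<gamma> \<gamma>'" and st: "0 \<le> s" "s \<le> t" "t \<le> 1"
    and e: "0 < e" and D0: "0 \<le> D"
    and D: "\<And>a b. s \<le> a \<Longrightarrow> a \<le> b \<Longrightarrow> b \<le> t \<Longrightarrow> \<gamma> a \<in> {0..1} \<Longrightarrow> \<gamma> b \<in> {0..1}
              \<Longrightarrow> \<gamma> b - \<gamma> a \<le> D"
  shows "integral {s..t} (J_integrand f \<gamma>) \<le> root CARD('n) B * root CARD('n) (\<Prod>i\<in>UNIV. D $ i + e)"
proof -
  have D0': "0 \<le> D $ i + e" for i using D0 e by (simp add: less_eq_vec_def add_nonneg_pos less_imp_le)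
  have RHS0: "0 \<le> root CARD('n) B * root CARD('n) (\<Prod>i\<in>UNIV. D $ i + e)"
    using B_nonneg D0' by (intro mult_nonneg_nonneg real_root_ge_zero prod_nonneg) auto
  define T where "T = {s..t} \<inter> \<gamma> -` {0..1}"
  have vanish: "J_integrand f \<gamma> \<tau> = 0" if "\<tau> \<in> {s..t}" "\<tau> \<notin> T" for \<tau>
    using that f_support[of "\<gamma> \<tau>"] by (intro J_integrand_eq_0) (auto simp: T_def)
  show ?thesis
  proof (cases "T = {}")
    case True
    then have "integral {s..t} (J_integrand f \<gamma>) = integral {s..s} (J_integrand f \<gamma>)"
      using st by (intro integral_eq_integral_subinterval vanish) auto
    then show ?thesis using RHS0 by simp
  next
    case False
    have "continuous_on {s..t} \<gamma>"
      using admissible_deriv_continuous[OF adm] by (rule continuous_on_subset) (use st in auto)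
    then have clT: "closed T" unfolding T_def by (rule continuous_closed_preimage) auto
    have bT: "bdd_below T" "bdd_above T" unfolding T_def by auto
    define a where "a = Inf T"
    define b where "b = Sup T"
    have aT: "a \<in> T" unfolding a_def using closed_contains_Inf[OF False bT(1) clT] .
    have bT': "b \<in> T" unfolding b_def using closed_contains_Sup[OF False bT(2) clT] .
    have Tab: "T \<subseteq> {a..b}" using bT by (auto simp: a_def b_def intro: cInf_lower cSup_upper)
    have ab: "s \<le> a" "a \<le> b" "b \<le> t" using aT bT' Tab by (auto simp: T_def subset_iff)
    have "integral {s..t} (J_integrand f \<gamma>) = integral {a..b} (J_integrand f \<gamma>)"
      using ab Tab by (intro integral_eq_integral_subinterval vanish) auto
    also have "\<dots> \<le> root CARD('n) B * root CARD('n) (\<Prod>i\<in>UNIV. (\<gamma> b - \<gamma> a) $ i + e)"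
      using ab st by (intro integral_J_integrand_le[OF adm _ _ _ f_le e]) auto
    also have "\<dots> \<le> root CARD('n) B * root CARD('n) (\<Prod>i\<in>UNIV. D $ i + e)"
    proof -
      have "\<gamma> a \<le> \<gamma> b" using admissible_deriv_mono[OF adm] ab st by simp
      moreover have "\<gamma> b - \<gamma> a \<le> D" using D[OF ab] aT bT' by (auto simp: T_def)
      ultimately have "(\<Prod>i\<in>UNIV. (\<gamma> b - \<gamma> a) $ i + e) \<le> (\<Prod>i\<in>UNIV. D $ i + e)"
        using e by (intro prod_mono) (auto simp: less_eq_vec_def)
      then show ?thesis using B_nonneg by (simp add: mult_left_mono)
    qed
    finally show ?thesis .
  qed
qed

lemma integral_J_integrand_le_coordinate_increment:
  assumes adm: "admissible_deriv \<gamma> \<gamma>'" and s: "0 \<le> s" "s \<le> 1" and h: "0 < h" "h \<le> 1"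
    and incr: "\<And>a b. s \<le> a \<Longrightarrow> a \<le> b \<Longrightarrow> b \<le> 1 \<Longrightarrow> \<gamma> a \<in> {0..1} \<Longrightarrow> \<gamma> b \<in> {0..1}
                 \<Longrightarrow> \<gamma> b $ i - \<gamma> a $ i \<le> h"
  shows "integral {s..1} (J_integrand f \<gamma>) \<le> root CARD('n) (2 ^ CARD('n) * B) * root CARD('n) h"
proof -
  define D :: "real^'n" where "D = (\<chi> j. if j = i then h else 1)"
  have "integral {s..1} (J_integrand f \<gamma>) \<le> root CARD('n) B * root CARD('n) (\<Prod>j\<in>UNIV. D $ j + h)"
  proof (rule integral_J_integrand_le_cube_increment[OF adm s(1,2) order_refl h(1)])
    show "0 \<le> D" using h by (simp add: D_def less_eq_vec_def)
    fix a b assume ab: "s \<le> a" "a \<le> b" "b \<le> 1" "\<gamma> a \<in> {0..1}" "\<gamma> b \<in> {0..1}"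
    show "\<gamma> b - \<gamma> a \<le> D"
      unfolding less_eq_vec_def
    proof
      fix j
      show "(\<gamma> b - \<gamma> a) $ j \<le> D $ j"
      proof (cases "j = i")
        case True
        then show ?thesis using incr[OF ab] by (simp add: D_def)
      next
        case False
        then show ?thesis using ab(4,5) by (simp add: D_def less_eq_vec_def) (smt (verit))
      qed
    qed
  qed
  also have "\<dots> \<le> root CARD('n) B * root CARD('n) (h * 2 ^ CARD('n))"
  proof -
    have "(\<Prod>j\<in>UNIV. D $ j + h) \<le> (\<Prod>j\<in>(UNIV::'n set). (if j = i then h else 1) * 2)"
      by (rule prod_mono) (use h in \<open>auto simp: D_def\<close>)
    also have "\<dots> = h * 2 ^ CARD('n)"
      by (simp add: prod.distrib prod.delta)
    finally show ?thesis using B_nonneg by (simp add: mult_left_mono)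
  qed
  finally show ?thesis by (simp add: real_root_mult mult_ac)
qed

lemma Jfun_nonneg: "admissible_deriv \<gamma> \<gamma>' \<Longrightarrow> 0 \<le> Jfun f \<gamma>"
  unfolding Jfun_eq_integral
  by (intro integral_nonneg J_integrand_integrable J_integrand_nonneg f_nonneg) auto

lemma Jfun_le:
  assumes adm: "admissible_deriv \<gamma> \<gamma>'"
  shows "Jfun f \<gamma> \<le> root CARD('n) (2 ^ CARD('n) * B)"
proof -
  have "\<gamma> b $ i - \<gamma> a $ i \<le> 1" if "\<gamma> a \<in> {0..1}" "\<gamma> b \<in> {0..1}" for a b i
    using that by (simp add: less_eq_vec_def) (smt (verit))
  then show ?thesis
    using integral_J_integrand_le_coordinate_increment[OF adm, of 0 1] by (simp add: Jfun_eq_integral)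
qed

lemma admissible_diagonal: "admissible (\<lambda>t. x - (1 - t) *\<^sub>R (1::real^'n))"
  unfolding admissible_iff_deriv admissible_deriv_def
  by (auto intro!: exI[of _ "\<lambda>_. 1"] derivative_eq_intros
      simp: has_real_derivative_iff_has_vector_derivative[symmetric] less_eq_vec_def)

lemma bdd_above_Jfun: "bdd_above {Jfun f \<gamma> |\<gamma>. admissible \<gamma> \<and> \<gamma> 1 \<le> x}"
  unfolding bdd_above_def admissible_iff_deriv using Jfun_le by blast

lemma Jfun_le_Ufun: "admissible \<gamma> \<Longrightarrow> \<gamma> 1 \<le> x \<Longrightarrow> Jfun f \<gamma> \<le> Ufun f x"
  unfolding Ufun_def by (rule cSup_upper[OF _ bdd_above_Jfun]) auto

lemma Ufun_le:
  "(\<And>\<gamma> \<gamma>'. admissible_deriv \<gamma> \<gamma>' \<Longrightarrow> \<gamma> 1 \<le> x \<Longrightarrow> Jfun f \<gamma> \<le> c) \<Longrightarrow> Ufun f x \<le> c"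
  unfolding Ufun_def using admissible_diagonal[of x]
  by (intro cSup_least) (auto simp: admissible_iff_deriv)

lemma Ufun_approx:
  assumes "0 < \<epsilon>"
  obtains \<gamma> \<gamma>' where "admissible_deriv \<gamma> \<gamma>'" "\<gamma> 1 \<le> x" "Ufun f x - \<epsilon> < Jfun f \<gamma>"
proof -
  have "Ufun f x - \<epsilon> < Sup {Jfun f \<gamma> |\<gamma>. admissible \<gamma> \<and> \<gamma> 1 \<le> x}"
    using assms by (simp add: Ufun_def)
  then show ?thesis
    using that admissible_diagonal[of x]
    by (subst (asm) less_cSup_iff[OF _ bdd_above_Jfun]) (auto simp: admissible_iff_deriv)
qed

lemma Ufun_nonneg: "0 \<le> Ufun f x"
proof -
  obtain \<gamma>' where "admissible_deriv (\<lambda>t. x - (1 - t) *\<^sub>R (1::real^'n)) \<gamma>'"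
    using admissible_diagonal admissible_iff_deriv by blast
  then have "0 \<le> Jfun f (\<lambda>t. x - (1 - t) *\<^sub>R (1::real^'n))" by (rule Jfun_nonneg)
  also have "\<dots> \<le> Ufun f x" by (rule Jfun_le_Ufun[OF admissible_diagonal]) simp
  finally show ?thesis .
qed

lemma Ufun_mono: "x \<le> y \<Longrightarrow> Ufun f x \<le> Ufun f y"
  by (rule Ufun_le) (meson Jfun_le_Ufun admissible_iff_deriv order_trans)

lemma Ufun_pareto_monotone: "pareto_monotone (Ufun f)"
  unfolding pareto_monotone_def using Ufun_mono by blast

lemma Jfun_le_Ufun_plus_tail:
  assumes adm: "admissible_deriv \<gamma> \<gamma>'" and s: "0 \<le> s" "s \<le> 1"
  shows "Jfun f \<gamma> \<le> Ufun f (\<gamma> s) + integral {s..1} (J_integrand f \<gamma>)"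
proof (cases "s = 0")
  case True
  then show ?thesis using Ufun_nonneg[of "\<gamma> s"] by (simp add: Jfun_eq_integral)
next
  case False
  then have "0 < s" using s by simp
  moreover have "Jfun f (\<lambda>t. \<gamma> (s * t)) \<le> Ufun f (\<gamma> s)"
    using admissible_deriv_rescale[OF adm \<open>0 < s\<close> s(2)]
    by (intro Jfun_le_Ufun) (auto simp: admissible_iff_deriv)
  ultimately show ?thesis using Jfun_split[OF adm _ s(2)] by simp
qed

end

lemma sum_axis_one: "(\<Sum>i\<in>UNIV. axis i (1::real)) = (1::real^'n)"
  by (simp add: vec_eq_iff sum_component axis_def)

context unit_cube_density
begin

lemma Ufun_eq_0:
  assumes x: "x $ i \<le> 0"
  shows "Ufun f x = 0"
proof -
  have "Ufun f x \<le> 0"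
  proof (rule Ufun_le)
    fix \<gamma> \<gamma>' assume adm: "admissible_deriv \<gamma> \<gamma>'" and end1: "\<gamma> 1 \<le> x"
    show "Jfun f \<gamma> \<le> 0"
    proof (rule nonpos_if_le_mult_root[of "CARD('n)" "root CARD('n) (2 ^ CARD('n) * B)"])
      fix h :: real assume h: "0 < h" "h \<le> 1"
      have "\<gamma> b $ i - \<gamma> a $ i \<le> h" if "0 \<le> b" "b \<le> 1" "\<gamma> a \<in> {0..1}" for a b
      proof -
        have "\<gamma> b $ i \<le> x $ i"
          using admissible_deriv_mono[OF adm that(1,2) order_refl] end1
          by (auto simp: less_eq_vec_def intro: order_trans)
        moreover have "0 \<le> \<gamma> a $ i" using that(3) by (simp add: less_eq_vec_def)
        ultimately show ?thesis using x h by linarith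
      qed
      then show "Jfun f \<gamma> \<le> root CARD('n) (2 ^ CARD('n) * B) * root CARD('n) h"
        unfolding Jfun_eq_integral
        by (intro integral_J_integrand_le_coordinate_increment[OF adm _ _ h, where i=i]) auto
    qed (use B_nonneg in auto)
  qed
  then show ?thesis using Ufun_nonneg[of x] by simp
qed

lemma Ufun_eq_Ufun_min:
  assumes z: "\<And>y. f y \<noteq> 0 \<Longrightarrow> y \<le> z"
  shows "Ufun f x = Ufun f (\<chi> i. min (x $ i) (z $ i))"
proof (rule antisym)
  define m :: "real^'n" where "m = (\<chi> i. min (x $ i) (z $ i))"
  show "Ufun f m \<le> Ufun f x" by (rule Ufun_mono) (simp add: m_def less_eq_vec_def)
  show "Ufun f x \<le> Ufun f m"
  proof (rule Ufun_le)
    fix \<gamma> \<gamma>' assume adm: "admissible_deriv \<gamma> \<gamma>'" and end1: "\<gamma> 1 \<le> x"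
    define T where "T = {0..1} \<inter> \<gamma> -` {..z}"
    have vanish: "J_integrand f \<gamma> \<tau> = 0" if "\<tau> \<in> {0..1}" "\<tau> \<notin> T" for \<tau>
      using that z[of "\<gamma> \<tau>"] by (intro J_integrand_eq_0) (auto simp: T_def)
    show "Jfun f \<gamma> \<le> Ufun f m"
    proof (cases "T = {}")
      case True
      then have "Jfun f \<gamma> = integral {0..0} (J_integrand f \<gamma>)"
        unfolding Jfun_eq_integral by (intro integral_eq_integral_subinterval vanish) auto
      then show ?thesis using Ufun_nonneg by simp
    next
      case False
      have "closed T" unfolding T_def
        by (rule continuous_closed_preimage[OF admissible_deriv_continuous[OF adm]]) auto
      moreover have bT: "bdd_above T" unfolding T_def by auto
      ultimately have sT: "Sup T \<in> T" using False closed_contains_Sup by blast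
      define s where "s = Sup T"
      have s: "0 \<le> s" "s \<le> 1" "\<gamma> s \<le> z" using sT by (auto simp: T_def s_def)
      have "\<gamma> s \<le> x" using admissible_deriv_mono[OF adm s(1,2) order_refl] end1 by simp
      with s(3) have "\<gamma> s \<le> m" by (simp add: m_def less_eq_vec_def)
      moreover have "\<tau> \<le> s" if "\<tau> \<in> T" for \<tau>
        using that bT by (simp add: s_def cSup_upper)
      then have "integral {s..1} (J_integrand f \<gamma>) = integral {s..s} (J_integrand f \<gamma>)"
        using s by (intro integral_eq_integral_subinterval vanish) force+
      ultimately show ?thesis
        using Jfun_le_Ufun_plus_tail[OF adm s(1,2)] Ufun_mono[of "\<gamma> s" m] by simp
    qed
  qed
qed

lemma Ufun_le_Ufun_shift_axis:
  assumes h: "0 < h" "h \<le> 1"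
  shows "Ufun f x \<le> Ufun f (x - h *\<^sub>R axis i 1) + root CARD('n) (2 ^ CARD('n) * B) * root CARD('n) h"
    (is "_ \<le> Ufun f ?y + ?Q")
proof (rule Ufun_le)
  fix \<gamma> \<gamma>' assume adm: "admissible_deriv \<gamma> \<gamma>'" and end1: "\<gamma> 1 \<le> x"
  have tail: "integral {s..1} (J_integrand f \<gamma>) \<le> ?Q"
    if s: "0 \<le> s" "s \<le> 1" "\<gamma> 1 $ i - \<gamma> s $ i \<le> h" for s
  proof (rule integral_J_integrand_le_coordinate_increment[OF adm s(1,2) h])
    fix a b assume "s \<le> a" "a \<le> b" "b \<le> 1"
    then have "\<gamma> s \<le> \<gamma> a" "\<gamma> b \<le> \<gamma> 1"
      using admissible_deriv_mono[OF adm] s by auto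
    then show "\<gamma> b $ i - \<gamma> a $ i \<le> h" using s(3) by (simp add: less_eq_vec_def) (smt (verit))
  qed
  have "\<gamma> 1 $ i \<le> x $ i" using end1 by (simp add: less_eq_vec_def)
  then consider (close) "x $ i - h < \<gamma> 0 $ i"
    | (cross) s where "0 \<le> s" "s \<le> 1" "\<gamma> s $ i \<le> x $ i - h" "\<gamma> 1 $ i - \<gamma> s $ i \<le> h"
  proof (cases "x $ i - h < \<gamma> 0 $ i")
    case False
    show ?thesis
    proof (cases "\<gamma> 1 $ i \<le> x $ i - h")
      case True
      then show ?thesis using that(2)[of 1] h by simp
    next
      case False
      with \<open>\<not> x $ i - h < \<gamma> 0 $ i\<close> obtain s where "0 \<le> s" "s \<le> 1" "\<gamma> s $ i = x $ i - h"
        using IVT'[of "\<lambda>t. \<gamma> t $ i" 0 "x $ i - h" 1]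
          continuous_on_component[OF admissible_deriv_continuous[OF adm]] by force
      then show ?thesis using that(2)[of s] \<open>\<gamma> 1 $ i \<le> x $ i\<close> by simp
    qed
  qed (rule that(1))
  then show "Jfun f \<gamma> \<le> Ufun f ?y + ?Q"
  proof cases
    case close
    then have "Jfun f \<gamma> \<le> ?Q"
      using tail[of 0] \<open>\<gamma> 1 $ i \<le> x $ i\<close> by (simp add: Jfun_eq_integral)
    then show ?thesis using Ufun_nonneg[of ?y] by simp
  next
    case cross
    have "\<gamma> s \<le> x" using admissible_deriv_mono[OF adm cross(1,2) order_refl] end1 by simp
    with cross(3) have "\<gamma> s \<le> ?y" by (auto simp: less_eq_vec_def axis_def)
    then show ?thesis
      using Jfun_le_Ufun_plus_tail[OF adm cross(1,2)] tail[OF cross(1,2,4)] Ufun_mono by fastforce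
  qed
qed

lemma Ufun_le_Ufun_shift_diagonal:
  assumes h: "0 < h" "h \<le> 1"
  shows "Ufun f x \<le> Ufun f (x - h *\<^sub>R 1) + CARD('n) * root CARD('n) (2 ^ CARD('n) * B) * root CARD('n) h"
proof -
  let ?Q = "root CARD('n) (2 ^ CARD('n) * B) * root CARD('n) h"
  have "Ufun f x \<le> Ufun f (x - h *\<^sub>R (\<Sum>i\<in>F. axis i 1)) + card F * ?Q" if "finite F" for F
    using that
  proof (induction F arbitrary: x rule: finite_induct)
    case (insert i F)
    have "Ufun f x \<le> Ufun f (x - h *\<^sub>R (\<Sum>i\<in>F. axis i 1)) + card F * ?Q" by (rule insert.IH)
    also have "Ufun f (x - h *\<^sub>R (\<Sum>i\<in>F. axis i 1))
                 \<le> Ufun f (x - h *\<^sub>R (\<Sum>i\<in>F. axis i 1) - h *\<^sub>R axis i 1) + ?Q"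
      by (rule Ufun_le_Ufun_shift_axis[OF h])
    finally show ?case using insert by (simp add: algebra_simps)
  qed simp
  from this[of UNIV] show ?thesis by (simp add: sum_axis_one mult.assoc)
qed

lemma continuous_on_Ufun: "continuous_on UNIV (Ufun f)"
  unfolding continuous_on_iff
proof (intro ballI allI impI)
  fix x :: "real^'n" and \<epsilon> :: real assume e: "0 < \<epsilon>"
  define K where "K = CARD('n) * root CARD('n) (2 ^ CARD('n) * B)"
  have K0: "0 \<le> K" using B_nonneg by (simp add: K_def)
  have shift: "Ufun f y \<le> Ufun f (y - h *\<^sub>R 1) + K * root CARD('n) h" if "0 < h" "h \<le> 1" for y h
    using Ufun_le_Ufun_shift_diagonal[OF that, of y] by (simp add: K_def)
  define h where "h = min 1 ((\<epsilon> / (K + 1)) ^ CARD('n))"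
  have h: "0 < h" "h \<le> 1" using e K0 by (auto simp: h_def)
  have "root CARD('n) h \<le> \<epsilon> / (K + 1)"
    using real_root_le_mono[of "CARD('n)" h "(\<epsilon> / (K + 1)) ^ CARD('n)"] e K0
    by (simp add: h_def real_root_power_cancel)
  then have "K * root CARD('n) h \<le> K * (\<epsilon> / (K + 1))" using K0 by (rule mult_left_mono)
  also have "\<dots> < \<epsilon>" using e K0 by (simp add: field_simps)
  finally have Kh: "K * root CARD('n) h < \<epsilon>" .
  show "\<exists>\<delta>>0. \<forall>y\<in>UNIV. dist y x < \<delta> \<longrightarrow> dist (Ufun f y) (Ufun f x) < \<epsilon>"
  proof (intro exI conjI ballI impI)
    fix y assume "dist y x < h"
    then have "\<bar>y $ i - x $ i\<bar> < h" for i
      by (metis component_le_norm_cart dist_norm le_less_trans vector_minus_component)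
    then have "x $ i - h \<le> y $ i \<and> y $ i - h \<le> x $ i" for i
      by (smt (verit))
    then have "x - h *\<^sub>R 1 \<le> y" "y - h *\<^sub>R 1 \<le> x"
      by (auto simp: less_eq_vec_def)
    then have "Ufun f y \<le> Ufun f x + K * root CARD('n) h" "Ufun f x \<le> Ufun f y + K * root CARD('n) h"
      using shift[OF h, of x] shift[OF h, of y] Ufun_mono by fastforce+
    then show "dist (Ufun f y) (Ufun f x) < \<epsilon>" using Kh by (simp add: dist_real_def abs_le_iff)
  qed (use h in simp)
qed

end

section \<open>The subsolution property\<close>

lemma superdiff_nonneg_if_pareto_monotone:
  assumes mono: "pareto_monotone u" and p: "p \<in> superdiff u x"
  shows "0 \<le> p"
  unfolding less_eq_vec_def
proof
  fix i
  show "0 $ i \<le> p $ i"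
  proof (rule ccontr)
    assume "\<not> 0 $ i \<le> p $ i"
    then have neg: "p $ i < 0" by simp
    obtain \<delta> where \<delta>: "0 < \<delta>"
      "\<And>y. norm (y - x) < \<delta> \<Longrightarrow> u y \<le> u x + inner p (y - x) + (- p $ i / 2) * norm (y - x)"
      using p neg unfolding superdiff_def mem_Collect_eq by (metis half_gt_zero neg_0_less_iff_less)
    have "u x \<le> u (x + (\<delta> / 2) *\<^sub>R axis i 1)"
      using mono \<delta>(1) unfolding pareto_monotone_def by (simp add: less_eq_vec_def axis_def)
    also have "\<dots> \<le> u x + (\<delta> / 2) * p $ i - p $ i / 2 * (\<delta> / 2)"
      using \<delta>(2)[of "x + (\<delta> / 2) *\<^sub>R axis i 1"] \<delta>(1) by (simp add: inner_axis)
    finally show False using mult_pos_neg[OF \<delta>(1) neg] by simp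
  qed
qed

lemma le_usc_env:
  assumes "\<And>r. 0 < r \<Longrightarrow> a \<le> Sup (g ` cball x r)"
  shows "a \<le> usc_env g x"
  unfolding usc_env_def by (rule cInf_greatest) (use assms in auto)

lemma le_at_left_end_if_le_after:
  fixes \<phi> :: "real \<Rightarrow> real"
  assumes "continuous_on {0..1} \<phi>" "0 \<le> s" "s < 1" and "\<And>\<tau>. s < \<tau> \<Longrightarrow> \<tau> \<le> 1 \<Longrightarrow> c \<le> \<phi> \<tau>"
  shows "c \<le> \<phi> s"
proof -
  have "closed ({0..1} \<inter> \<phi> -` {c..})"
    by (rule continuous_closed_preimage[OF assms(1)]) auto
  moreover have "{s<..1} \<subseteq> {0..1} \<inter> \<phi> -` {c..}" using assms(2,4) by auto
  ultimately have "closure {s<..1} \<subseteq> {0..1} \<inter> \<phi> -` {c..}" by (rule closure_minimal[rotated])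
  then show ?thesis using assms(2,3) by force
qed

lemma last_exit_time:
  fixes \<gamma> :: "real \<Rightarrow> real^'n"
  assumes cont: "continuous_on {0..1} \<gamma>" and above: "\<And>j. b $ j < \<gamma> 1 $ j"
  obtains s where "0 \<le> s" "s < 1" "\<And>\<tau>. s \<le> \<tau> \<Longrightarrow> \<tau> \<le> 1 \<Longrightarrow> b \<le> \<gamma> \<tau>"
    and "s = 0 \<or> (\<exists>j. \<gamma> s $ j \<le> b $ j)"
proof -
  have comp: "continuous_on {0..1} (\<lambda>\<tau>. \<gamma> \<tau> $ j)" for j by (rule continuous_on_component[OF cont])
  define T where "T = {\<tau> \<in> {0..1}. \<exists>j. \<gamma> \<tau> $ j \<le> b $ j}"
  have "T = (\<Union>j. {0..1} \<inter> (\<lambda>\<tau>. \<gamma> \<tau> $ j) -` {..b $ j})" by (auto simp: T_def)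
  moreover have "closed (\<Union>j. {0..1} \<inter> (\<lambda>\<tau>. \<gamma> \<tau> $ j) -` {..b $ j})"
    by (intro closed_UN) (auto intro: continuous_closed_preimage[OF comp])
  ultimately have clT: "closed T" by (simp only:)
  have bT: "bdd_above T" by (rule bdd_above_mono[OF bdd_above_Icc[of 0 1]]) (auto simp: T_def)
  define s where "s = (if T = {} then 0 else Sup T)"
  have upper: "\<tau> \<le> s" if "\<tau> \<in> T" for \<tau> using that bT by (auto simp: s_def cSup_upper)
  have sT: "s \<in> T" if "T \<noteq> {}" using closed_contains_Sup[OF that bT clT] that by (simp add: s_def)
  have "1 \<notin> T" using above by (auto simp: T_def not_le)
  have "0 \<le> s \<and> s < 1"
  proof (cases "T = {}")
    case False
    with sT \<open>1 \<notin> T\<close> have "s \<in> {0..1}" "s \<noteq> 1" by (auto simp: T_def)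
    then show ?thesis by auto
  qed (simp add: s_def)
  then have s: "0 \<le> s" "s < 1" by auto
  have strict: "b $ j < \<gamma> \<tau> $ j" if "s < \<tau>" "\<tau> \<le> 1" for \<tau> j
  proof -
    have "\<tau> \<notin> T" using upper[of \<tau>] that by linarith
    then show ?thesis using that s by (auto simp: T_def not_le)
  qed
  have "b \<le> \<gamma> \<tau>" if "s \<le> \<tau>" "\<tau> \<le> 1" for \<tau>
    unfolding less_eq_vec_def
  proof
    fix j
    show "b $ j \<le> \<gamma> \<tau> $ j"
    proof (cases "\<tau> = s")
      case True
      show ?thesis unfolding True
        by (rule le_at_left_end_if_le_after[OF comp s]) (simp add: strict less_imp_le)
    next
      case False
      then show ?thesis using strict[of \<tau> j] that by simp
    qed
  qed
  moreover have "s = 0 \<or> (\<exists>j. \<gamma> s $ j \<le> b $ j)"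
  proof (cases "T = {}")
    case False
    then show ?thesis using sT by (auto simp: T_def)
  qed (simp add: s_def)
  ultimately show ?thesis using that s by blast
qed

context unit_cube_density
begin

lemma tail_integral_le_at_last_exit:
  fixes \<rho> c :: real
  assumes adm: "admissible_deriv \<gamma> \<gamma>'" and end1: "\<gamma> 1 \<le> x" and \<rho>: "0 < \<rho>"
    and close: "\<And>j. x $ j - \<rho> < \<gamma> 1 $ j" and p: "\<And>i. 0 < p $ i"
    and c: "\<And>y. norm (y - x) \<le> 2 * real CARD('n) * \<rho> \<Longrightarrow> f y \<le> c"
  obtains s where "0 \<le> s" "s \<le> 1" "norm (\<gamma> s - x) \<le> 2 * real CARD('n) * \<rho>"
    and "integral {s..1} (J_integrand f \<gamma>)
           \<le> root CARD('n) c * inner p (\<gamma> 1 - \<gamma> s) / (CARD('n) * root CARD('n) (\<Prod>i\<in>UNIV. p $ i))"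
    and "s = 0 \<or> (\<exists>j. \<rho> \<le> (\<gamma> 1 - \<gamma> s) $ j)"
proof -
  define b :: "real^'n" where "b = x - (2 * \<rho>) *\<^sub>R 1"
  have "b $ j < \<gamma> 1 $ j" for j using close[of j] \<rho> by (simp add: b_def)
  then obtain s where s: "0 \<le> s" "s < 1" and box: "\<And>\<tau>. s \<le> \<tau> \<Longrightarrow> \<tau> \<le> 1 \<Longrightarrow> b \<le> \<gamma> \<tau>"
    and exit: "s = 0 \<or> (\<exists>j. \<gamma> s $ j \<le> b $ j)"
    using last_exit_time[OF admissible_deriv_continuous[OF adm]] by blast
  have near: "norm (\<gamma> \<tau> - x) \<le> 2 * real CARD('n) * \<rho>" if \<tau>: "s \<le> \<tau>" "\<tau> \<le> 1" for \<tau>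
  proof -
    have "\<gamma> \<tau> \<le> x" using admissible_deriv_mono[OF adm _ \<tau>(2) order_refl] \<tau> s end1 by simp
    have "\<bar>(\<gamma> \<tau> - x) $ j\<bar> \<le> 2 * \<rho>" for j
    proof -
      have "\<gamma> \<tau> $ j \<le> x $ j" "x $ j - 2 * \<rho> \<le> \<gamma> \<tau> $ j"
        using \<open>\<gamma> \<tau> \<le> x\<close> box[OF \<tau>] by (simp_all add: less_eq_vec_def b_def)
      then show ?thesis by (simp add: abs_le_iff)
    qed
    then show ?thesis using norm_le_card_mult[of "\<gamma> \<tau> - x" "2 * \<rho>"] by (simp add: mult_ac)
  qed
  have "f (\<gamma> \<tau>) \<le> c" if "\<tau> \<in> {s..1}" for \<tau>
    using that near by (intro c) auto
  then have "integral {s..1} (J_integrand f \<gamma>) \<le>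
      root CARD('n) c * inner p (\<gamma> 1 - \<gamma> s) / (CARD('n) * root CARD('n) (\<Prod>i\<in>UNIV. p $ i))"
    using s p by (intro integral_J_integrand_le_weighted[OF adm]) auto
  moreover have "s = 0 \<or> (\<exists>j. \<rho> \<le> (\<gamma> 1 - \<gamma> s) $ j)"
  proof (cases "s = 0")
    case False
    then obtain j where "\<gamma> s $ j \<le> b $ j" using exit by blast
    then have "\<rho> \<le> (\<gamma> 1 - \<gamma> s) $ j" using close[of j] by (simp add: b_def)
    then show ?thesis by blast
  qed simp
  ultimately show ?thesis using that s near[of s] by simp
qed

text \<open>If a near-optimal curve for \<open>x\<close> stays in a small box below \<open>x\<close> from its exit time \<open>s\<close> on,
  the tail bound (weighted AM-GM with weights \<open>p\<close>) only recovers the fraction \<open>\<theta> < 1\<close> of the loss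
  \<open>\<langle>p, \<gamma>(1) - \<gamma>(s)\<rangle>\<close> that the superdifferential inequality charges to \<open>U(\<gamma>(s))\<close>.\<close>

lemma superdiff_Ufun_local_root_bound:
  assumes p: "p \<in> superdiff (Ufun f) x" and ppos: "\<And>i. 0 < p $ i"
    and r: "0 < r" and c: "\<And>y. y \<in> cball x r \<Longrightarrow> f y \<le> c"
  shows "real CARD('n) * root CARD('n) (\<Prod>i\<in>UNIV. p $ i) \<le> root CARD('n) c"
proof (rule ccontr)
  define d where "d = real CARD('n)"
  have d1: "1 \<le> d" by (simp add: d_def)
  define P where "P = root CARD('n) (\<Prod>i\<in>UNIV. p $ i)"
  have P0: "0 < P" using ppos by (simp add: P_def prod_pos)
  have p0: "0 \<le> p $ i" for i using ppos[of i] by simp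
  have c0: "0 \<le> c" using c[of x] f_nonneg[of x] r by auto
  assume "\<not> ?thesis"
  then have "root CARD('n) c < d * P" by (simp add: d_def P_def)
  define \<theta> where "\<theta> = root CARD('n) c / (d * P)"
  have \<theta>: "0 \<le> \<theta>" "\<theta> < 1"
    using \<open>root CARD('n) c < d * P\<close> d1 P0 c0 by (auto simp: \<theta>_def divide_less_eq)
  define m where "m = Min (range (\<lambda>i. p $ i))"
  have m0: "0 < m" and pm: "\<And>i. m \<le> p $ i" using ppos by (auto simp: m_def)
  define S where "S = (\<Sum>i\<in>UNIV. p $ i)"
  have mS: "m \<le> S"
    using pm[of undefined] member_le_sum[of undefined UNIV "\<lambda>i. p $ i"] p0 by (simp add: S_def)
  define \<kappa> where "\<kappa> = (1 - \<theta>) * m / 4 / (2 * d + 1)"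
  have \<kappa>0: "0 < \<kappa>" using \<theta> m0 d1 by (simp add: \<kappa>_def)
  obtain \<delta> where \<delta>: "0 < \<delta>"
    "\<And>y. norm (y - x) < \<delta> \<Longrightarrow> Ufun f y \<le> Ufun f x + inner p (y - x) + \<kappa> * norm (y - x)"
    using p \<kappa>0 unfolding superdiff_def by blast
  define \<rho> where "\<rho> = min \<delta> r / (4 * d)"
  have \<rho>: "0 < \<rho>" "2 * d * \<rho> < \<delta>" "2 * d * \<rho> \<le> r"
    using \<delta> r d1 by (auto simp: \<rho>_def field_simps)
  define E where "E = (1 - \<theta>) * m * \<rho> / 4"
  have "2 * d + 1 \<noteq> 0" using d1 by simp
  then have \<kappa>d: "\<kappa> * (2 * d + 1) = (1 - \<theta>) * m / 4" by (metis \<kappa>_def nonzero_eq_divide_eq)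
  have "\<kappa> * \<rho> + \<kappa> * (2 * d * \<rho>) = \<kappa> * (2 * d + 1) * \<rho>" by (simp add: algebra_simps)
  also have "\<dots> = (1 - \<theta>) * m / 4 * \<rho>" by (simp only: \<kappa>d)
  finally have E: "\<kappa> * \<rho> + \<kappa> * (2 * d * \<rho>) = E" by (simp add: E_def)
  have "(1 - \<theta>) * (m * \<rho>) \<le> m * \<rho>" using \<theta> m0 \<rho>(1) by (simp add: mult_left_le_one_le)
  then have E_lt: "E < m * \<rho> / 2" using m0 \<rho>(1) by (simp add: E_def)
  have sup: "Ufun f y \<le> Ufun f x + inner p (y - x) + \<kappa> * (2 * d * \<rho>)"
    if "norm (y - x) \<le> 2 * d * \<rho>" for y
    using \<delta>(2)[of y] that \<rho>(2) mult_left_mono[OF that less_imp_le[OF \<kappa>0]] by simp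
  obtain \<gamma> \<gamma>' where adm: "admissible_deriv \<gamma> \<gamma>'" and end1: "\<gamma> 1 \<le> x"
    and opt: "Ufun f x - \<kappa> * \<rho> < Jfun f \<gamma>"
    using Ufun_approx[of "\<kappa> * \<rho>" x] \<kappa>0 \<rho>(1) by auto
  show False
  proof (cases "\<exists>i. \<gamma> 1 $ i \<le> x $ i - \<rho>")
    case True
    then obtain i where "\<gamma> 1 $ i \<le> x $ i - \<rho>" by blast
    with end1 have "\<gamma> 1 \<le> x - \<rho> *\<^sub>R axis i 1" by (auto simp: less_eq_vec_def axis_def)
    then have "Ufun f x - \<kappa> * \<rho> < Ufun f (x - \<rho> *\<^sub>R axis i 1)"
      using opt Jfun_le_Ufun adm by (meson admissible_iff_deriv less_le_trans)
    moreover have "norm (- (\<rho> *\<^sub>R axis i (1::real))) \<le> 2 * d * \<rho>"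
      using \<rho>(1) d1 by simp
    ultimately have "\<rho> * p $ i < E"
      using sup[of "x - \<rho> *\<^sub>R axis i 1"] E by (simp add: inner_axis algebra_simps)
    moreover have "m * \<rho> \<le> \<rho> * p $ i" using pm[of i] \<rho>(1) by (simp add: mult.commute)
    ultimately show False using E_lt mult_pos_pos[OF m0 \<rho>(1)] by linarith
  next
    case False
    then have close: "x $ j - \<rho> < \<gamma> 1 $ j" for j by (simp add: not_le)
    have "f y \<le> c" if "norm (y - x) \<le> 2 * real CARD('n) * \<rho>" for y
      using c that \<rho>(3) by (simp add: d_def dist_norm norm_minus_commute)
    from tail_integral_le_at_last_exit[OF adm end1 \<rho>(1) close ppos this, folded d_def P_def]
    obtain s where s: "0 \<le> s" "s \<le> 1" "norm (\<gamma> s - x) \<le> 2 * d * \<rho>"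
      and tail0: "integral {s..1} (J_integrand f \<gamma>) \<le> root CARD('n) c * inner p (\<gamma> 1 - \<gamma> s) / (d * P)"
      and exit: "s = 0 \<or> (\<exists>j. \<rho> \<le> (\<gamma> 1 - \<gamma> s) $ j)" .
    define \<Delta> where "\<Delta> = \<gamma> 1 - \<gamma> s"
    have tail: "integral {s..1} (J_integrand f \<gamma>) \<le> \<theta> * inner p \<Delta>"
      using tail0 by (simp add: \<theta>_def \<Delta>_def)
    have \<Delta>0: "0 \<le> \<Delta> $ i" for i
      using admissible_deriv_mono[OF adm s(1,2) order_refl] by (simp add: \<Delta>_def less_eq_vec_def)
    have pos: "0 \<le> inner p \<Delta>" unfolding inner_vec_def using p0 \<Delta>0 by (simp add: sum_nonneg)
    have "inner p (\<gamma> 1 - x) \<le> 0"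
      unfolding inner_vec_def using p0 end1
      by (intro sum_nonpos) (simp add: less_eq_vec_def mult_nonneg_nonpos)
    then have "inner p (\<gamma> s - x) \<le> - inner p \<Delta>"
      by (simp add: \<Delta>_def inner_diff_right)
    then have U_exit: "Ufun f (\<gamma> s) \<le> Ufun f x - inner p \<Delta> + \<kappa> * (2 * d * \<rho>)"
      using sup[OF s(3)] by linarith
    have "Ufun f x - \<kappa> * \<rho> < Ufun f (\<gamma> s) + \<theta> * inner p \<Delta>"
      using opt tail Jfun_le_Ufun_plus_tail[OF adm s(1,2)] by linarith
    with U_exit E have key: "inner p \<Delta> - \<theta> * inner p \<Delta> < E" by linarith
    have "m * \<rho> / 2 \<le> inner p \<Delta>"
      using exit
    proof
      assume "s = 0"
      have "norm (- (\<rho> *\<^sub>R (1::real^'n))) \<le> 2 * d * \<rho>"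
        using norm_le_card_mult[of "- (\<rho> *\<^sub>R (1::real^'n))" \<rho>] \<rho>(1) d1 by (simp add: d_def)
      then have "0 \<le> Ufun f x - \<rho> * S + \<kappa> * (2 * d * \<rho>)"
        using sup[of "x - \<rho> *\<^sub>R 1"] Ufun_nonneg[of "x - \<rho> *\<^sub>R 1"]
        by (simp add: S_def inner_vec_def sum_distrib_left sum_negf mult.commute)
      moreover have "\<theta> * inner p \<Delta> \<le> inner p \<Delta>" using \<theta> pos by (simp add: mult_left_le_one_le)
      then have "Jfun f \<gamma> \<le> inner p \<Delta>"
        using tail \<open>s = 0\<close> by (simp add: Jfun_eq_integral \<Delta>_def)
      moreover have "m * \<rho> \<le> \<rho> * S" using mS \<rho>(1) by (simp add: mult.commute)
      ultimately show ?thesis using opt E E_lt by linarith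
    next
      assume "\<exists>j. \<rho> \<le> (\<gamma> 1 - \<gamma> s) $ j"
      then obtain j where "\<rho> \<le> \<Delta> $ j" by (auto simp: \<Delta>_def)
      then have "m * \<rho> \<le> p $ j * \<Delta> $ j" using pm[of j] m0 \<rho>(1) by (simp add: mult_mono)
      also have "\<dots> \<le> inner p \<Delta>"
        using member_le_sum[of j UNIV "\<lambda>i. p $ i * \<Delta> $ i"] p0 \<Delta>0 by (simp add: inner_vec_def)
      finally show ?thesis using mult_pos_pos[OF m0 \<rho>(1)] by linarith
    qed
    then have "(1 - \<theta>) * (m * \<rho> / 2) \<le> (1 - \<theta>) * inner p \<Delta>"
      using \<theta> by (intro mult_left_mono) auto
    moreover have "(1 - \<theta>) * inner p \<Delta> = inner p \<Delta> - \<theta> * inner p \<Delta>"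
      by (simp add: algebra_simps)
    moreover have "0 < (1 - \<theta>) * (m * \<rho>)" using \<theta> m0 \<rho>(1) by simp
    moreover have "E = (1 - \<theta>) * (m * \<rho>) / 4" "(1 - \<theta>) * (m * \<rho> / 2) = (1 - \<theta>) * (m * \<rho>) / 2"
      by (simp_all add: E_def)
    ultimately show False using key by linarith
  qed
qed

lemma superdiff_Ufun_local_bound:
  assumes p: "p \<in> superdiff (Ufun f) x" and r: "0 < r" and c: "\<And>y. y \<in> cball x r \<Longrightarrow> f y \<le> c"
  shows "real CARD('n) ^ CARD('n) * (\<Prod>i\<in>UNIV. p $ i) \<le> c"
proof -
  have p0: "0 \<le> p $ i" for i
    using superdiff_nonneg_if_pareto_monotone[OF Ufun_pareto_monotone p] by (simp add: less_eq_vec_def)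
  have c0: "0 \<le> c" using c[of x] f_nonneg[of x] r by auto
  show ?thesis
  proof (cases "\<exists>i. p $ i = 0")
    case True
    then have "(\<Prod>i\<in>UNIV. p $ i) = 0" by (metis UNIV_I finite prod_zero)
    with c0 show ?thesis by (simp only: mult_zero_right)
  next
    case False
    then have "0 < p $ i" for i using p0[of i] by (simp add: order_less_le)
    from superdiff_Ufun_local_root_bound[OF p this r c]
    have le: "real CARD('n) * root CARD('n) (\<Prod>i\<in>UNIV. p $ i) \<le> root CARD('n) c" .
    have "0 \<le> real CARD('n) * root CARD('n) (\<Prod>i\<in>UNIV. p $ i)"
      using p0 by (intro mult_nonneg_nonneg real_root_ge_zero prod_nonneg) auto
    from power_mono[OF le this, of "CARD('n)"]
    show ?thesis
      using c0 p0 by (simp add: power_mult_distrib real_root_pow_pos2 prod_nonneg)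
  qed
qed

end

section \<open>The supersolution property\<close>

lemma subdiff_nonneg_if_pareto_monotone:
  assumes mono: "pareto_monotone u" and p: "p \<in> subdiff u x"
  shows "0 \<le> p"
  unfolding less_eq_vec_def
proof
  fix i
  show "0 $ i \<le> p $ i"
  proof (rule ccontr)
    assume "\<not> 0 $ i \<le> p $ i"
    then have neg: "p $ i < 0" by simp
    obtain \<delta> where \<delta>: "0 < \<delta>"
      "\<And>y. norm (y - x) < \<delta> \<Longrightarrow> u x + inner p (y - x) - (- p $ i / 2) * norm (y - x) \<le> u y"
      using p neg unfolding subdiff_def mem_Collect_eq by (metis half_gt_zero neg_0_less_iff_less)
    have "u x - (\<delta> / 2) * p $ i + p $ i / 2 * (\<delta> / 2) \<le> u (x - (\<delta> / 2) *\<^sub>R axis i 1)"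
      using \<delta>(2)[of "x - (\<delta> / 2) *\<^sub>R axis i 1"] \<delta>(1) by (simp add: inner_axis)
    also have "\<dots> \<le> u x"
      using mono \<delta>(1) unfolding pareto_monotone_def by (simp add: less_eq_vec_def axis_def)
    finally show False using mult_pos_neg[OF \<delta>(1) neg] by simp
  qed
qed

lemma lsc_env_le:
  fixes g :: "real^'n \<Rightarrow> real"
  assumes "bdd_below (range g)" and "\<And>r. 0 < r \<Longrightarrow> Inf (g ` cball x r) \<le> a"
  shows "lsc_env g x \<le> a"
proof -
  have "- a \<le> usc_env (\<lambda>y. - g y) x"
  proof (rule le_usc_env)
    fix r :: real assume "0 < r"
    have "bdd_below (g ` cball x r)" using assms(1) by (meson bdd_below_mono image_mono subset_UNIV)
    then have "Inf (g ` cball x r) = - Sup ((\<lambda>y. - g y) ` cball x r)"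
      using uminus_cSUP[of "\<lambda>y. - g y" "cball x r"] \<open>0 < r\<close> by (simp add: bdd_above_uminus_image)
    then show "- a \<le> Sup ((\<lambda>y. - g y) ` cball x r)" using assms(2)[OF \<open>0 < r\<close>] by simp
  qed
  then show ?thesis by (simp add: lsc_env_def)
qed

lemma bump_function:
  fixes a b :: real
  assumes ab: "a < b"
  obtains k :: "real \<Rightarrow> real" where "continuous_on UNIV k" "\<And>s. 0 \<le> k s"
    "\<And>s. s \<notin> {a<..<b} \<Longrightarrow> k s = 0" "(k has_integral 1) {a..b}"
proof -
  define C where "C = 6 / (b - a) ^ 3"
  define k where "k = (\<lambda>s. C * max 0 ((s - a) * (b - s)))"
  define F where "F = (\<lambda>s::real. C * (- (s ^ 3) / 3 + (a + b) * s ^ 2 / 2 - a * b * s))"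
  have "(k has_integral (F b - F a)) {a..b}"
  proof (rule fundamental_theorem_of_calculus)
    fix s assume s: "s \<in> {a..b}"
    have "(F has_real_derivative C * ((s - a) * (b - s))) (at s within {a..b})"
      unfolding F_def by (rule derivative_eq_intros refl | simp)+ (simp add: algebra_simps power2_eq_square)
    moreover have "k s = C * ((s - a) * (b - s))" using s by (simp add: k_def)
    ultimately show "(F has_vector_derivative k s) (at s within {a..b})"
      by (simp add: has_real_derivative_iff_has_vector_derivative)
  qed (use ab in simp)
  moreover have "F b - F a = C * ((b - a) ^ 3 / 6)"
    unfolding F_def by (simp add: field_simps power2_eq_square power3_eq_cube)
  ultimately have "(k has_integral 1) {a..b}" using ab by (simp add: C_def)
  moreover have "k s = 0" if "s \<notin> {a<..<b}" for s
  proof -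
    have "(s - a) * (b - s) \<le> 0"
      using that ab by (auto simp: not_less intro: mult_nonpos_nonneg mult_nonneg_nonpos)
    then show ?thesis by (simp add: k_def)
  qed
  moreover have "continuous_on UNIV k" unfolding k_def by (intro continuous_intros)
  moreover have "0 \<le> k s" for s using ab by (simp add: k_def C_def)
  ultimately show ?thesis using that by blast
qed

lemma smooth_step:
  fixes a b :: real
  assumes ab: "0 \<le> a" "a < b" "b \<le> 1"
  obtains S k :: "real \<Rightarrow> real"
  where "\<And>t. t \<in> {0..1} \<Longrightarrow> (S has_real_derivative k t) (at t within {0..1})"
    "continuous_on {0..1} k" "\<And>t. 0 \<le> k t" "\<And>t. t \<le> a \<Longrightarrow> k t = 0"
    "\<And>t. t \<in> {0..a} \<Longrightarrow> S t = 0" "\<And>t. t \<in> {b..1} \<Longrightarrow> S t = 1" "\<And>t. 0 \<le> S t \<and> S t \<le> 1"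
    "(k has_integral 1) {a..b}"
proof -
  obtain k :: "real \<Rightarrow> real" where k: "continuous_on UNIV k" "\<And>s. 0 \<le> k s" "\<And>s. s \<notin> {a<..<b} \<Longrightarrow> k s = 0"
    "(k has_integral 1) {a..b}"
    using bump_function[OF ab(2)] by blast
  define S where "S = (\<lambda>t. integral {0..t} k)"
  have int: "k integrable_on {u..v}" for u v
    by (rule integrable_continuous_real) (rule continuous_on_subset[OF k(1)], simp)
  have S_eq: "S t = integral {a..b} k" if "b \<le> t" for t
    unfolding S_def using ab that by (intro integral_eq_integral_subinterval k(3)) auto
  have S_max: "S t \<le> 1" for t
  proof (cases "b \<le> t")
    case False
    then have "S t \<le> S b"
      unfolding S_def using ab int k(2) by (intro integral_subset_le) auto
    then show ?thesis using S_eq[of b] k(4) by (simp add: integral_unique)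
  qed (use S_eq k(4) in \<open>simp add: integral_unique\<close>)
  show thesis
  proof
    show "continuous_on {0..1} k" using k(1) by (rule continuous_on_subset) simp
    show "(S has_real_derivative k t) (at t within {0..1})" if "t \<in> {0..1}" for t
      unfolding S_def has_real_derivative_iff_has_vector_derivative
      by (rule integral_has_vector_derivative[OF _ that]) (rule continuous_on_subset[OF k(1)], simp)
    show "S t = 0" if "t \<in> {0..a}" for t
      unfolding S_def using that by (subst integral_eq_integral_subinterval[of 0 0]) (auto intro: k(3))
    show "S t = 1" if "t \<in> {b..1}" for t using S_eq that k(4) by (simp add: integral_unique)
    show "0 \<le> S t \<and> S t \<le> 1" for t
      using S_max integral_nonneg[OF int k(2)] by (simp add: S_def)
  qed (use k ab in auto)
qed

lemma admissible_deriv_add_step: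
  assumes adm: "admissible_deriv \<gamma> \<gamma>'" and k: "continuous_on {0..1} k" "\<And>t. 0 \<le> k t"
    and S: "\<And>t. t \<in> {0..1} \<Longrightarrow> (S has_real_derivative k t) (at t within {0..1})" and w: "0 \<le> w"
  shows "admissible_deriv (\<lambda>t. \<gamma> t + S t *\<^sub>R w) (\<lambda>t. \<gamma>' t + k t *\<^sub>R w)"
  unfolding admissible_deriv_def
proof (intro conjI ballI)
  show "continuous_on {0..1} (\<lambda>t. \<gamma>' t + k t *\<^sub>R w)"
    using adm k(1) unfolding admissible_deriv_def by (intro continuous_intros) auto
  fix t :: real assume t: "t \<in> {0..1}"
  have "((\<lambda>t. S t *\<^sub>R w) has_vector_derivative k t *\<^sub>R w) (at t within {0..1})"
    using S[OF t] by (auto intro!: derivative_eq_intros simp: has_real_derivative_iff_has_vector_derivative)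
  then show "((\<lambda>t. \<gamma> t + S t *\<^sub>R w) has_vector_derivative \<gamma>' t + k t *\<^sub>R w) (at t within {0..1})"
    using adm t unfolding admissible_deriv_def by (intro has_vector_derivative_add) auto
  have "0 \<le> \<gamma>' t" "\<gamma>' t \<noteq> 0" using adm t unfolding admissible_deriv_def by auto
  moreover have "0 \<le> k t *\<^sub>R w" using k(2) w by (simp add: scaleR_nonneg_nonneg)
  ultimately show "0 \<le> \<gamma>' t + k t *\<^sub>R w" "\<gamma>' t + k t *\<^sub>R w \<noteq> 0"
    by (auto simp: add_nonneg_eq_0_iff)
qed

context bounded_density
begin

lemma integral_J_integrand_ge:
  assumes adm: "admissible_deriv \<eta> \<eta>'" and ab: "0 \<le> a" "a \<le> b" "b \<le> 1"
    and c: "0 \<le> c" "\<And>t. t \<in> {a..b} \<Longrightarrow> c \<le> f (\<eta> t)"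
    and k: "(k has_integral I) {a..b}" "\<And>t. 0 \<le> k t" and v: "0 \<le> v"
    and le: "\<And>t. t \<in> {a..b} \<Longrightarrow> k t *\<^sub>R v \<le> \<eta>' t"
  shows "root CARD('n) c * root CARD('n) (\<Prod>i\<in>UNIV. v $ i) * I \<le> integral {a..b} (J_integrand f \<eta>)"
proof -
  define C where "C = root CARD('n) c * root CARD('n) (\<Prod>i\<in>UNIV. v $ i)"
  have "C * k t \<le> J_integrand f \<eta> t" if t: "t \<in> {a..b}" for t
  proof -
    have t01: "t \<in> {0..1}" using t ab by auto
    have "root CARD('n) (\<Prod>i\<in>UNIV. v $ i) * k t = root CARD('n) (\<Prod>i\<in>UNIV. k t * v $ i)"
      using k(2) by (simp add: root_prod_scale)
    also have "\<dots> \<le> root CARD('n) (\<Prod>i\<in>UNIV. \<eta>' t $ i)"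
      using le[OF t] v k(2) by (simp add: less_eq_vec_def prod_mono)
    finally have "root CARD('n) (\<Prod>i\<in>UNIV. v $ i) * k t \<le> root CARD('n) (\<Prod>i\<in>UNIV. \<eta>' t $ i)" .
    moreover have "root CARD('n) c \<le> root CARD('n) (f (\<eta> t))" using c(2)[OF t] by simp
    ultimately show ?thesis
      unfolding J_integrand_eq[OF adm t01] C_def mult.assoc
      using c(1) v k(2) by (intro mult_mono) (auto simp: less_eq_vec_def prod_nonneg)
  qed
  then have "integral {a..b} (\<lambda>t. C * k t) \<le> integral {a..b} (J_integrand f \<eta>)"
    using has_integral_integrable[OF has_integral_mult_right[OF k(1)]] J_integrand_integrable[OF adm ab(1,3)]
    by (intro integral_le) auto
  then show ?thesis using integral_unique[OF k(1)] by (simp add: C_def)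
qed

lemma admissible_curve_near_end:
  assumes adm: "admissible_deriv \<gamma> \<gamma>'" and "0 < R" "0 < \<epsilon>"
  obtains t0 where "0 \<le> t0" "t0 < 1" "\<And>t. t \<in> {t0..1} \<Longrightarrow> norm (\<gamma> t - \<gamma> 1) < R"
    and "integral {t0..1} (J_integrand f \<gamma>) < \<epsilon>"
proof -
  have "1 \<in> {0..1::real}" by simp
  from admissible_deriv_continuous[OF adm] this \<open>0 < R\<close>
  obtain \<delta>1 where \<delta>1: "0 < \<delta>1" "\<And>t. t \<in> {0..1} \<Longrightarrow> dist t 1 < \<delta>1 \<Longrightarrow> dist (\<gamma> t) (\<gamma> 1) < R"
    unfolding continuous_on_iff by metis
  from indefinite_integral_continuous_1'[OF J_integrand_integrable[OF adm order_refl order_refl]]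
    \<open>1 \<in> {0..1}\<close> \<open>0 < \<epsilon>\<close>
  obtain \<delta>2 where \<delta>2: "0 < \<delta>2" "\<And>t. t \<in> {0..1} \<Longrightarrow> dist t 1 < \<delta>2
      \<Longrightarrow> dist (integral {t..1} (J_integrand f \<gamma>)) (integral {1..1} (J_integrand f \<gamma>)) < \<epsilon>"
    unfolding continuous_on_iff by metis
  define t0 where "t0 = 1 - min 1 (min \<delta>1 \<delta>2) / 2"
  have t0: "0 \<le> t0" "t0 < 1" using \<delta>1(1) \<delta>2(1) by (auto simp: t0_def)
  have "dist t 1 < \<delta>1 \<and> dist t 1 < \<delta>2" if "t \<in> {t0..1}" for t
    using that \<delta>1(1) \<delta>2(1) by (auto simp: t0_def dist_real_def)
  then show ?thesis
    using that[OF t0] \<delta>1(2) \<delta>2(2)[of t0] t0 by (force simp: dist_norm dist_real_def)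
qed

text \<open>The new curve is \<open>\<gamma> + A (y - \<gamma>(1)) + B h v\<close> with smooth steps \<open>A\<close>, \<open>B\<close>
  switched on in turn near \<open>t = 1\<close>, so that it stays admissible.\<close>

lemma admissible_extension:
  fixes h c R \<epsilon> :: real
  assumes adm: "admissible_deriv \<gamma> \<gamma>'" and y: "\<gamma> 1 \<le> y" and v: "0 \<le> v" and h: "0 \<le> h"
    and \<epsilon>: "0 < \<epsilon>" and c: "0 \<le> c" and R: "h * norm v < R"
    and fc: "\<And>w. norm (w - y) \<le> R \<Longrightarrow> c \<le> f w"
  obtains \<eta> where "admissible \<eta>" "\<eta> 1 = y + h *\<^sub>R v"
    "Jfun f \<gamma> - \<epsilon> + h * root CARD('n) c * root CARD('n) (\<Prod>i\<in>UNIV. v $ i) \<le> Jfun f \<eta>"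
proof -
  obtain t0 where t0: "0 \<le> t0" "t0 < 1"
    and close: "\<And>t. t \<in> {t0..1} \<Longrightarrow> norm (\<gamma> t - \<gamma> 1) < R - h * norm v"
    and small: "integral {t0..1} (J_integrand f \<gamma>) < \<epsilon>"
    using admissible_curve_near_end[OF adm _ \<epsilon>, of "R - h * norm v"] R by auto
  define t1 where "t1 = (t0 + 1) / 2"
  have t1: "t0 < t1" "t1 < 1" using t0 by (auto simp: t1_def)
  obtain A ka where A: "\<And>t. t \<in> {0..1} \<Longrightarrow> (A has_real_derivative ka t) (at t within {0..1})"
      "continuous_on {0..1} ka" "\<And>t. 0 \<le> ka t" "\<And>t. t \<le> t0 \<Longrightarrow> ka t = 0"
      "\<And>t. t \<in> {0..t0} \<Longrightarrow> A t = 0" "\<And>t. t \<in> {t1..1} \<Longrightarrow> A t = 1"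
      "\<And>t. 0 \<le> A t \<and> A t \<le> 1" "(ka has_integral 1) {t0..t1}"
    using smooth_step[OF t0(1) t1(1) less_imp_le[OF t1(2)]] by blast
  obtain B kb where B: "\<And>t. t \<in> {0..1} \<Longrightarrow> (B has_real_derivative kb t) (at t within {0..1})"
      "continuous_on {0..1} kb" "\<And>t. 0 \<le> kb t" "\<And>t. t \<le> t1 \<Longrightarrow> kb t = 0"
      "\<And>t. t \<in> {0..t1} \<Longrightarrow> B t = 0" "\<And>t. t \<in> {1..1} \<Longrightarrow> B t = 1"
      "\<And>t. 0 \<le> B t \<and> B t \<le> 1" "(kb has_integral 1) {t1..1}"
    using smooth_step[OF order_trans[OF t0(1) less_imp_le[OF t1(1)]] t1(2) order_refl] by blast
  define w where "w = y - \<gamma> 1"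
  define \<eta> where "\<eta> = (\<lambda>t. \<gamma> t + A t *\<^sub>R w + B t *\<^sub>R (h *\<^sub>R v))"
  define \<eta>' where "\<eta>' = (\<lambda>t. \<gamma>' t + ka t *\<^sub>R w + kb t *\<^sub>R (h *\<^sub>R v))"
  have w: "0 \<le> w" and hv: "0 \<le> h *\<^sub>R v" using y v h by (simp_all add: w_def scaleR_nonneg_nonneg)
  have adm\<eta>: "admissible_deriv \<eta> \<eta>'" unfolding \<eta>_def \<eta>'_def
    by (intro admissible_deriv_add_step adm A B w hv)
  have int: "J_integrand f \<eta> integrable_on {a..b}" "J_integrand f \<gamma> integrable_on {a..b}"
    if "0 \<le> a" "b \<le> 1" for a b
    using that by (simp_all add: J_integrand_integrable[OF adm\<eta>] J_integrand_integrable[OF adm])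
  have start: "integral {0..t0} (J_integrand f \<eta>) = integral {0..t0} (J_integrand f \<gamma>)"
  proof (rule integral_cong)
    fix t assume t: "t \<in> {0..t0}"
    then have "\<eta> t = \<gamma> t" "\<eta>' t = \<gamma>' t" using t1 A(4,5) B(4,5)[of t] by (auto simp: \<eta>_def \<eta>'_def)
    then show "J_integrand f \<eta> t = J_integrand f \<gamma> t"
      using t t0 J_integrand_eq[OF adm\<eta>, of t] J_integrand_eq[OF adm, of t] by simp
  qed
  have middle: "0 \<le> integral {t0..t1} (J_integrand f \<eta>)"
    using t0 t1 by (intro integral_nonneg int J_integrand_nonneg[OF adm\<eta>] f_nonneg) auto
  have "root CARD('n) c * root CARD('n) (\<Prod>i\<in>UNIV. (h *\<^sub>R v) $ i) * 1 \<le> integral {t1..1} (J_integrand f \<eta>)"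
  proof (rule integral_J_integrand_ge[OF adm\<eta> _ _ order_refl c _ B(8) B(3) hv])
    fix t assume t: "t \<in> {t1..1}"
    then have "\<eta> t - y = (\<gamma> t - \<gamma> 1) + B t *\<^sub>R (h *\<^sub>R v)" using A(6) by (simp add: \<eta>_def w_def)
    then have "norm (\<eta> t - y) \<le> norm (\<gamma> t - \<gamma> 1) + B t * (h * norm v)"
      using B(7)[of t] h by (simp add: norm_triangle_ineq[THEN order_trans])
    also have "\<dots> \<le> norm (\<gamma> t - \<gamma> 1) + h * norm v"
      using B(7)[of t] h by (simp add: mult_left_le_one_le)
    finally show "c \<le> f (\<eta> t)" using close[of t] t t1 by (intro fc) auto
    have "0 \<le> \<gamma>' t + ka t *\<^sub>R w"
      using adm w A(3)[of t] t t1 t0 unfolding admissible_deriv_def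
      by (auto intro!: add_nonneg_nonneg scaleR_nonneg_nonneg)
    then show "kb t *\<^sub>R (h *\<^sub>R v) \<le> \<eta>' t" by (simp add: \<eta>'_def)
  qed (use t0 t1 in auto)
  then have final: "h * root CARD('n) c * root CARD('n) (\<Prod>i\<in>UNIV. v $ i) \<le> integral {t1..1} (J_integrand f \<eta>)"
    using h by (simp add: root_prod_scale mult_ac)
  have "Jfun f \<gamma> = integral {0..t0} (J_integrand f \<gamma>) + integral {t0..1} (J_integrand f \<gamma>)"
    unfolding Jfun_eq_integral using t0 int
    by (simp add: Henstock_Kurzweil_Integration.integral_combine)
  moreover have "Jfun f \<eta> = integral {0..t0} (J_integrand f \<eta>) + integral {t0..t1} (J_integrand f \<eta>)
      + integral {t1..1} (J_integrand f \<eta>)"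
    unfolding Jfun_eq_integral using t0 t1 int
    by (simp add: Henstock_Kurzweil_Integration.integral_combine)
  moreover have "admissible \<eta>" using adm\<eta> admissible_iff_deriv by blast
  moreover have "\<eta> 1 = y + h *\<^sub>R v" using A(6)[of 1] B(6)[of 1] t1 by (simp add: \<eta>_def w_def)
  ultimately show ?thesis using that start middle final small by (smt (verit))
qed

end

context unit_cube_density
begin

text \<open>Starting from a near-optimal curve for \<open>x - h v\<close> with \<open>v = (1/(p\<^sub>i + e))\<^sub>i\<close> and appending
  the segment to \<open>x\<close> gains \<open>h (c \<Prod>v)\<^sup>1\<^sup>/\<^sup>d\<close>, which exceeds the \<open>h \<langle>p, v\<rangle> \<le> h d\<close> allowed by the
  subdifferential inequality.\<close>

lemma subdiff_Ufun_local_bound: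
  assumes p: "p \<in> subdiff (Ufun f) x" and r: "0 < r" and c: "\<And>y. y \<in> cball x r \<Longrightarrow> c \<le> f y"
  shows "c \<le> real CARD('n) ^ CARD('n) * (\<Prod>i\<in>UNIV. p $ i)"
proof (rule ccontr)
  define d where "d = real CARD('n)"
  have d1: "1 \<le> d" by (simp add: d_def)
  have p0: "0 \<le> p $ i" for i
    using subdiff_nonneg_if_pareto_monotone[OF Ufun_pareto_monotone p] by (simp add: less_eq_vec_def)
  assume "\<not> ?thesis"
  then have lt: "d ^ CARD('n) * (\<Prod>i\<in>UNIV. p $ i + 0) < c" by (simp add: d_def)
  have "((\<lambda>e. d ^ CARD('n) * (\<Prod>i\<in>UNIV. p $ i + e)) \<longlongrightarrow> d ^ CARD('n) * (\<Prod>i\<in>UNIV. p $ i + 0)) (at_right 0)"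
    by (intro tendsto_intros)
  from order_tendstoD(2)[OF this lt] eventually_at_right_less[of "0::real"]
  have "\<forall>\<^sub>F e in at_right 0. 0 < e \<and> d ^ CARD('n) * (\<Prod>i\<in>UNIV. p $ i + e) < c"
    by (auto elim: eventually_mono intro: eventually_conj)
  then obtain e where e: "0 < e" and Q_lt: "d ^ CARD('n) * (\<Prod>i\<in>UNIV. p $ i + e) < c"
    using eventually_happens[of _ "at_right (0::real)"] by auto
  define v :: "real^'n" where "v = (\<chi> i. 1 / (p $ i + e))"
  have v: "0 < v $ i" for i using p0[of i] e by (simp add: v_def add_nonneg_pos)
  define Q where "Q = (\<Prod>i\<in>UNIV. p $ i + e)"
  have Q0: "0 < Q" using p0 e by (simp add: Q_def prod_pos add_nonneg_pos)
  define V where "V = root CARD('n) (\<Prod>i\<in>UNIV. v $ i)"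
  have V: "V = 1 / root CARD('n) Q" by (simp add: V_def v_def Q_def prod_dividef real_root_divide)
  have pv: "inner p v \<le> d"
  proof -
    have "inner p v \<le> (\<Sum>i\<in>(UNIV::'n set). 1)"
      unfolding inner_vec_def v_def using p0 e by (intro sum_mono) (simp add: add_nonneg_pos)
    then show ?thesis by (simp add: d_def)
  qed
  have "root CARD('n) (d ^ CARD('n) * Q) < root CARD('n) c" using Q_lt by (simp add: Q_def)
  moreover have "root CARD('n) (d ^ CARD('n) * Q) = d * root CARD('n) Q"
    using d1 by (simp add: real_root_mult real_root_power_cancel)
  ultimately have "d * root CARD('n) Q < root CARD('n) c" by simp
  then have "d < root CARD('n) c * V" using Q0 by (simp add: V field_simps)
  define \<kappa> where "\<kappa> = root CARD('n) c * V - inner p v"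
  have \<kappa>: "0 < \<kappa>" using \<open>d < root CARD('n) c * V\<close> pv by (simp add: \<kappa>_def)
  define N where "N = norm v"
  have N: "0 < N" using v[of undefined] by (auto simp: N_def)
  define \<epsilon> where "\<epsilon> = \<kappa> / (N + 2)"
  have \<epsilon>: "0 < \<epsilon>" "\<epsilon> * (N + 2) = \<kappa>" using \<kappa> N by (simp_all add: \<epsilon>_def)
  obtain \<delta> where \<delta>: "0 < \<delta>"
    "\<And>y. norm (y - x) < \<delta> \<Longrightarrow> Ufun f x + inner p (y - x) - \<epsilon> * norm (y - x) \<le> Ufun f y"
    using p \<epsilon>(1) unfolding subdiff_def by blast
  define h where "h = min (\<delta> / (2 * N)) (r / (3 * N))"
  have h: "0 < h" "h * N < \<delta>" "3 * (h * N) \<le> r"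
    using \<delta> r N by (auto simp: h_def min_def field_simps)
  define y where "y = x - h *\<^sub>R v"
  have ny: "norm (y - x) = h * N" using h(1) by (simp add: y_def N_def)
  have Uy: "Ufun f x - h * inner p v - \<epsilon> * (h * N) \<le> Ufun f y"
    using \<delta>(2)[of y] ny h(2) by (simp add: y_def inner_minus_right)
  obtain \<gamma> \<gamma>' where adm: "admissible_deriv \<gamma> \<gamma>'" and end1: "\<gamma> 1 \<le> y"
    and opt: "Ufun f y - \<epsilon> * h < Jfun f \<gamma>"
    using Ufun_approx[of "\<epsilon> * h" y] \<epsilon>(1) h(1) by auto
  have fc: "c \<le> f w" if "norm (w - y) \<le> 2 * (h * N)" for w
  proof (rule c)
    have "norm (w - x) \<le> norm (w - y) + norm (y - x)"
      using norm_triangle_ineq[of "w - y" "y - x"] by simp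
    then show "w \<in> cball x r" using that ny h(3) by (simp add: dist_norm norm_minus_commute)
  qed
  have "0 \<le> d ^ CARD('n) * (\<Prod>i\<in>UNIV. p $ i + 0)" using p0 d1 by (simp add: prod_nonneg)
  then have c0: "0 \<le> c" using lt by linarith
  have hN: "h * norm v < 2 * (h * N)" using h(1) N by (simp add: N_def)
  have v0: "0 \<le> v" using v by (simp add: less_eq_vec_def less_imp_le)
  from admissible_extension[OF adm end1 v0 less_imp_le[OF h(1)] mult_pos_pos[OF \<epsilon>(1) h(1)] c0 hN fc]
  obtain \<eta> where adm\<eta>: "admissible \<eta>" and end\<eta>: "\<eta> 1 = y + h *\<^sub>R v"
    and gain: "Jfun f \<gamma> - \<epsilon> * h + h * root CARD('n) c * root CARD('n) (\<Prod>i\<in>UNIV. v $ i) \<le> Jfun f \<eta>" .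
  have "Jfun f \<eta> \<le> Ufun f x" by (rule Jfun_le_Ufun[OF adm\<eta>]) (simp add: end\<eta> y_def)
  moreover have "h * \<kappa> = h * root CARD('n) c * root CARD('n) (\<Prod>i\<in>UNIV. v $ i) - h * inner p v"
    by (simp add: \<kappa>_def V_def algebra_simps)
  moreover have "h * \<kappa> = \<epsilon> * (h * N) + 2 * (\<epsilon> * h)"
    unfolding \<epsilon>(2)[symmetric] by (simp add: algebra_simps)
  ultimately show False using Uy opt gain by linarith
qed

lemma viscosity_solution_Ufun:
  "viscosity_solution (Ufun f) (\<lambda>x. f x / real CARD('n) ^ CARD('n)) UNIV"
  (is "viscosity_solution _ ?G _")
proof -
  have pos: "0 < real CARD('n) ^ CARD('n)" by simp
  have "?G y \<le> f y" for y
    using divide_left_mono[OF _ f_nonneg[of y], of 1 "real CARD('n) ^ CARD('n)"] by (simp add: one_le_power)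
  then have G_bounds: "0 \<le> ?G y" "?G y \<le> B" for y
    using f_nonneg[of y] f_le[of y] order_trans by auto
  have "(\<Prod>i\<in>UNIV. p $ i) \<le> usc_env ?G x" if p: "p \<in> superdiff (Ufun f) x" for x p
  proof (rule le_usc_env)
    fix r :: real assume r: "0 < r"
    have "bdd_above (?G ` cball x r)" using G_bounds by (intro bdd_aboveI[of _ B]) auto
    then have "?G y \<le> Sup (?G ` cball x r)" if "y \<in> cball x r" for y
      using that by (intro cSup_upper) auto
    then have "f y \<le> real CARD('n) ^ CARD('n) * Sup (?G ` cball x r)" if "y \<in> cball x r" for y
      using that pos by (simp add: pos_divide_le_eq mult.commute)
    from superdiff_Ufun_local_bound[OF p r this] pos
    show "(\<Prod>i\<in>UNIV. p $ i) \<le> Sup (?G ` cball x r)" by simp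
  qed
  moreover have "lsc_env ?G x \<le> (\<Prod>i\<in>UNIV. p $ i)" if p: "p \<in> subdiff (Ufun f) x" for x p
  proof (rule lsc_env_le)
    show "bdd_below (range ?G)" using G_bounds by (intro bdd_belowI[of _ 0]) auto
    fix r :: real assume r: "0 < r"
    have "bdd_below (?G ` cball x r)" using G_bounds by (intro bdd_belowI[of _ 0]) auto
    then have "Inf (?G ` cball x r) \<le> ?G y" if "y \<in> cball x r" for y
      using that by (intro cInf_lower) auto
    then have "real CARD('n) ^ CARD('n) * Inf (?G ` cball x r) \<le> f y" if "y \<in> cball x r" for y
      using that pos by (simp add: pos_le_divide_eq mult.commute)
    from subdiff_Ufun_local_bound[OF p r this] pos
    show "Inf (?G ` cball x r) \<le> (\<Prod>i\<in>UNIV. p $ i)" by simp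
  qed
  ultimately show ?thesis
    unfolding viscosity_solution_def by (auto intro: continuous_on_Ufun)
qed

end

lemma support_not_zero: "f x \<noteq> 0 \<Longrightarrow> x \<in> support f"
  using closure_subset[of "{x. f x \<noteq> 0}"] unfolding support_def by auto

lemma unit_cube_density_if_support:
  fixes f :: "real^'n \<Rightarrow> real"
  assumes "bounded (range f)" "f \<in> borel_measurable borel" "\<forall>x. 0 \<le> f x"
    and "support f \<subseteq> {x. \<forall>i. 0 \<le> x $ i \<and> x $ i \<le> 1}"
  obtains B where "unit_cube_density f B"
proof -
  obtain B where "\<And>x. \<bar>f x\<bar> \<le> B" using assms(1) unfolding bounded_iff by auto
  then have "\<And>x. f x \<le> B" using abs_le_D1 by blast
  moreover have "x \<in> {0..1}" if "f x \<noteq> 0" for x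
    using assms(4) support_not_zero[of f x, OF that] by (auto simp: less_eq_vec_def)
  ultimately have "unit_cube_density f B" using assms(2,3) by unfold_locales auto
  then show ?thesis by (rule that)
qed

theorem theorem2p6:
  fixes f :: "real^'n \<Rightarrow> real"
  assumes "CARD('n) \<ge> 2"
    and "bounded (range f)"
    and "f \<in> borel_measurable borel"
    and "\<forall>x. 0 \<le> f x"
    and "support f \<subseteq> {x. \<forall>i. 0 \<le> x $ i \<and> x $ i \<le> 1}"
  shows "pareto_monotone (Ufun f)
       \<and> viscosity_solution (Ufun f) (\<lambda>x. f x / real CARD('n) ^ CARD('n)) UNIV
       \<and> (\<forall>z. support f \<subseteq> {x. 0 \<le> x \<and> x \<le> z} \<longrightarrow>
              (\<forall>x. (\<forall>i. 0 < x $ i) \<longrightarrow> Ufun f x = Ufun f (\<chi> i. min (x $ i) (z $ i))))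
       \<and> (\<forall>x. \<not> (\<forall>i. 0 < x $ i) \<longrightarrow> Ufun f x = 0)"
proof -
  obtain B where "unit_cube_density f B" using unit_cube_density_if_support assms(2-5) by blast
  then interpret unit_cube_density f B .
  show ?thesis
  proof (intro conjI allI impI)
    show "pareto_monotone (Ufun f)" by (rule Ufun_pareto_monotone)
    show "viscosity_solution (Ufun f) (\<lambda>x. f x / real CARD('n) ^ CARD('n)) UNIV"
      by (rule viscosity_solution_Ufun)
    fix x z :: "real^'n"
    assume z: "support f \<subseteq> {x. 0 \<le> x \<and> x \<le> z}"
    show "Ufun f x = Ufun f (\<chi> i. min (x $ i) (z $ i))"
    proof (rule Ufun_eq_Ufun_min)
      fix y assume "f y \<noteq> 0"
      then have "y \<in> support f" by (rule support_not_zero)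
      with z show "y \<le> z" by blast
    qed
  next
    fix x :: "real^'n"
    assume "\<not> (\<forall>i. 0 < x $ i)"
    then obtain i where "x $ i \<le> 0" by (auto simp: not_less)
    then show "Ufun f x = 0" by (rule Ufun_eq_0)
  qed
qed

end
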